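(* Consider $N$ agents running the DOGD-GT algorithm with constant step size $\eta$ for $T$ iterations, as described in the context. Suppose Assumptions 1 and 2 hold: <ul> <li>(Assumption 1) each $f_{t,i}$ is convex and $L$-smooth, and there is $D$ with $\mathbb{E}[\|\nabla f_{t,i}(x)\|^2]\le D$;</li> <li>(Assumption 2) with $F(x)=\mathbb{E}[f_{t,i}(x)]$, there is $\sigma\ge0$ with $\mathbb{E}[\|\nabla f_{t,i}(x)-\nabla F(x)\|^2]\le\sigma^2$.</li> </ul> Let $\rho$ be the spectral norm of $W-\frac1N\mathbf{1}\mathbf{1}^T$. If \[ \eta\le\min\Big\{\frac{(1-\rho^2)^{1.5}}{32L\sqrt{1+\rho^2}},\ \frac1{2L}\sqrt{\frac NT}\Big\} \] and $N=o(T^{1/3})$, then the average regret satisfies \[ \mathbb{E}[\mathbf{R}]=O\Big(\eta^2T+\frac{\eta T}{N}+\frac1\eta\Big)=O\Big(\sqrt{\frac TN}\Big). \]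
   Context: Graph and weights: agents $\{1,\dots,N\}$ communicate over an undirected connected graph. The matrix $W=[w_{ij}]$ is doubly stochastic, with $w_{ij}>0$ if $(i,j)$ is an edge, $w_{ii}>0$, and $w_{ij}=0$ otherwise; $\rho\in(0,1)$. Losses: at iteration $t$, agent $i$ incurs a random convex loss $f_{t,i}$, where all $f_{t,i}$ follow a common unknown distribution $\mathcal{P}$. DOGD-GT with step size $\eta$: <ul> <li>$x_{1,i}=0$ and $s_{1,i}=\nabla f_{1,i}(x_{1,i})$;</li> <li>for $t\ge2$, $s_{t,i}=\sum_j w_{ij}s_{t-1,j}+\nabla f_{t,i}(x_{t,i})-\nabla f_{t-1,i}(x_{t-1,i})$;</li> <li>$x_{t+1,i}=\sum_j w_{ij}x_{t,j}-\eta s_{t,i}$.</li> </ul> Each iteration uses one communication step with neighbors. Regret: with $x^*=\arg\min_x\mathbb{E}_{f\sim\mathcal{P}}[f(x)]$, the average regret per agent is \[ \mathbf{R}=\frac1N\Big[\sum_{i=1}^N\sum_{t=1}^T f_{t,i}(x_{t,i})-\sum_{i=1}^N\sum_{t=1}^T f_{t,i}(x^* )\Big]. \] *)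

theory Defs
  imports "HOL-Probability.Probability" "HOL-Library.Landau_Symbols"
begin

text \<open>Agents are indexed by 0,...,N-1; iterations by t = 1,2,...
  The random loss of agent i at time t is \<open>loss (\<xi> t i \<omega>)\<close>, where the data
  \<open>\<xi> t i\<close> are i.i.d. with distribution P. \<open>G t i y\<close> denotes the gradient of
  f_{t,i} at y.  \<open>dogd G W N \<eta> k\<close> is the pair (x_{k+1}, s_{k+1}).\<close>

primrec dogd :: "(nat \<Rightarrow> nat \<Rightarrow> 'a \<Rightarrow> 'a::real_vector) \<Rightarrow> (nat \<Rightarrow> nat \<Rightarrow> real) \<Rightarrow> nat \<Rightarrow> real
    \<Rightarrow> nat \<Rightarrow> (nat \<Rightarrow> 'a) \<times> (nat \<Rightarrow> 'a)" where
  "dogd G W N \<eta> 0 = ((\<lambda>i. 0), (\<lambda>i. G 1 i 0))"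
| "dogd G W N \<eta> (Suc k) =
     (let x = fst (dogd G W N \<eta> k); s = snd (dogd G W N \<eta> k);
          x' = (\<lambda>i. (\<Sum>j<N. W i j *\<^sub>R x j) - \<eta> *\<^sub>R s i)
      in (x', (\<lambda>i. (\<Sum>j<N. W i j *\<^sub>R s j) + G (k + 2) i (x' i) - G (k + 1) i (x i))))"

definition dogd_x :: "(nat \<Rightarrow> nat \<Rightarrow> 'a \<Rightarrow> 'a::real_vector) \<Rightarrow> (nat \<Rightarrow> nat \<Rightarrow> real) \<Rightarrow> nat \<Rightarrow> real
    \<Rightarrow> nat \<Rightarrow> nat \<Rightarrow> 'a" where
  "dogd_x G W N \<eta> t i = fst (dogd G W N \<eta> (t - 1)) i"

definition regret :: "('b \<Rightarrow> 'a::real_vector \<Rightarrow> real) \<Rightarrow> ('b \<Rightarrow> 'a \<Rightarrow> 'a) \<Rightarrow> (nat \<Rightarrow> nat \<Rightarrow> 'w \<Rightarrow> 'b)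
    \<Rightarrow> 'a \<Rightarrow> (nat \<Rightarrow> nat \<Rightarrow> real) \<Rightarrow> nat \<Rightarrow> real \<Rightarrow> nat \<Rightarrow> 'w \<Rightarrow> real" where
  "regret loss g \<xi> xs W N \<eta> T \<omega> =
     (1 / real N) * ((\<Sum>i<N. \<Sum>t\<in>{1..T}.
         loss (\<xi> t i \<omega>) (dogd_x (\<lambda>t i y. g (\<xi> t i \<omega>) y) W N \<eta> t i))
       - (\<Sum>i<N. \<Sum>t\<in>{1..T}. loss (\<xi> t i \<omega>) xs))"

definition expected_regret :: "'w measure \<Rightarrow> ('b \<Rightarrow> 'a::real_vector \<Rightarrow> real) \<Rightarrow> ('b \<Rightarrow> 'a \<Rightarrow> 'a)
    \<Rightarrow> (nat \<Rightarrow> nat \<Rightarrow> 'w \<Rightarrow> 'b) \<Rightarrow> 'a \<Rightarrow> (nat \<Rightarrow> nat \<Rightarrow> real) \<Rightarrow> nat \<Rightarrow> real \<Rightarrow> nat \<Rightarrow> real" where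
  "expected_regret M loss g \<xi> xs W N \<eta> T = (\<integral>\<omega>. regret loss g \<xi> xs W N \<eta> T \<omega> \<partial>M)"

definition gossip_matrix :: "nat \<Rightarrow> (nat \<Rightarrow> nat \<Rightarrow> real) \<Rightarrow> bool" where
  "gossip_matrix N W \<longleftrightarrow>
     (\<forall>i<N. (\<Sum>j<N. W i j) = 1) \<and> (\<forall>j<N. (\<Sum>i<N. W i j) = 1) \<and>
     (\<forall>i<N. W i i > 0) \<and>
     (\<exists>E. E \<subseteq> {..<N} \<times> {..<N} \<and> sym E \<and> (\<forall>i. (i, i) \<notin> E) \<and>
          (\<forall>i<N. \<forall>j<N. (i, j) \<in> E\<^sup>*) \<and>
          (\<forall>i<N. \<forall>j<N. i \<noteq> j \<longrightarrow> ((i, j) \<in> E \<longrightarrow> W i j > 0) \<and> ((i, j) \<notin> E \<longrightarrow> W i j = 0)))"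

definition spec_norm :: "nat \<Rightarrow> (nat \<Rightarrow> nat \<Rightarrow> real) \<Rightarrow> real" where
  "spec_norm N A = Sup {sqrt (\<Sum>i<N. (\<Sum>j<N. A i j * v j)\<^sup>2) | v. (\<Sum>j<N. (v j)\<^sup>2) = 1}"

definition eta_max :: "real \<Rightarrow> real \<Rightarrow> nat \<Rightarrow> nat \<Rightarrow> real" where
  "eta_max L \<rho> N T = min ((1 - \<rho>\<^sup>2) powr 1.5 / (32 * L * sqrt (1 + \<rho>\<^sup>2)))
                          (1 / (2 * L) * sqrt (real N / real T))"

end

theory Submission
  imports Defs
begin

text \<open>
  The data of all agents and times are modelled as the coordinates \<open>y (t, i)\<close> of a sample path
  drawn from the product of copies of \<open>P\<close>. The iterate \<open>x\<^sub>t\<^sub>,\<^sub>i\<close> depends only on the data of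
  times \<open>< t\<close>, so integrating out the fresh coordinate \<open>(t, i)\<close> turns the loss and the
  stochastic gradient at \<open>x\<^sub>t\<^sub>,\<^sub>i\<close> into \<open>F\<close> and \<open>\<nabla>F\<close>.

  Gradient tracking keeps the network average of \<open>s\<^sub>k\<close> equal to the average of the current
  stochastic gradients, so the network average of \<open>x\<^sub>k\<close> performs SGD with the averaged gradient. The gossip
  step contracts disagreement by \<open>\<rho>\<close>; with Young's inequality this gives geometric recursions for
  the consensus errors of \<open>s\<^sub>k\<close> and \<open>x\<^sub>k\<close>, hence \<open>E \<parallel>x\<^sub>k - 1 avg x\<^sub>k\<parallel>\<^sup>2 = O(\<eta>\<^sup>2 N D)\<close>.
  Convexity, \<open>\<parallel>\<nabla>F x\<parallel>\<^sup>2 \<le> 4 L (F x - F x*)\<close> and the independence of the noise of different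
  agents give the descent inequality
  \<open>E \<parallel>avg x\<^sub>k\<^sub>+\<^sub>1 - x*\<parallel>\<^sup>2 + (\<eta> / N) E \<Sum>\<^sub>i (F x\<^sub>k\<^sub>,\<^sub>i - F x*) \<le> E \<parallel>avg x\<^sub>k - x*\<parallel>\<^sup>2 + O(\<eta>\<^sup>3) + 2 \<eta>\<^sup>2 \<sigma>\<^sup>2 / N\<close>.
  Telescoping bounds the expected regret by \<open>\<parallel>x*\<parallel>\<^sup>2 / \<eta> + O(\<eta>\<^sup>2 T) + 2 \<sigma>\<^sup>2 \<eta> T / N\<close>, and for
  \<open>\<eta> = \<eta>\<^sub>m\<^sub>a\<^sub>x\<close> with \<open>N\<^sup>3 \<le> T\<close> each of these terms is \<open>O(\<surd>(T / N))\<close>.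
\<close>

section \<open>Measurability of Caratheodory functions\<close>

definition grid_round :: "nat \<Rightarrow> 'a::euclidean_space \<Rightarrow> 'a" where
  "grid_round n x = (\<Sum>b\<in>Basis. (of_int \<lfloor>real (Suc n) * (x \<bullet> b)\<rfloor> / real (Suc n)) *\<^sub>R b)"

lemma borel_measurable_grid_round: "grid_round n \<in> borel_measurable borel"
  unfolding grid_round_def by measurable

lemma countable_range_grid_round: "countable (range (grid_round n :: 'a::euclidean_space \<Rightarrow> 'a))"
proof -
  define scale :: "('a \<Rightarrow> int) \<Rightarrow> 'a" where
    "scale q = (\<Sum>b\<in>Basis. (of_int (q b) / real (Suc n)) *\<^sub>R b)" for q
  have "range (grid_round n) \<subseteq> scale ` ((Basis :: 'a set) \<rightarrow>\<^sub>E (UNIV :: int set))"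
  proof
    fix v assume "v \<in> range (grid_round n :: 'a \<Rightarrow> 'a)"
    then obtain x where v: "v = grid_round n x" by auto
    let ?q = "restrict (\<lambda>b. \<lfloor>real (Suc n) * (x \<bullet> b)\<rfloor>) (Basis :: 'a set)"
    have "v = scale ?q"
      unfolding v grid_round_def scale_def by (intro sum.cong) auto
    then show "v \<in> scale ` ((Basis :: 'a set) \<rightarrow>\<^sub>E UNIV)" by auto
  qed
  moreover have "countable ((Basis :: 'a set) \<rightarrow>\<^sub>E (UNIV :: int set))"
    by (intro countable_PiE) auto
  ultimately show ?thesis by (meson countable_image countable_subset)
qed

lemma norm_grid_round_diff_le: "norm (grid_round n x - x) \<le> real DIM('a) / real (Suc n)"
  for x :: "'a::euclidean_space"
proof -
  define m where "m = real (Suc n)"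
  have m: "m > 0" unfolding m_def by simp
  have "grid_round n x - x = (\<Sum>b\<in>Basis. (of_int \<lfloor>m * (x \<bullet> b)\<rfloor> / m - x \<bullet> b) *\<^sub>R b)"
    unfolding grid_round_def m_def
    by (subst (2) euclidean_representation[symmetric]) (simp add: sum_subtractf scaleR_diff_left)
  also have "norm \<dots> \<le> (\<Sum>b\<in>(Basis::'a set). norm ((of_int \<lfloor>m * (x \<bullet> b)\<rfloor> / m - x \<bullet> b) *\<^sub>R b))"
    by (rule norm_sum)
  also have "\<dots> \<le> (\<Sum>b\<in>(Basis::'a set). 1 / m)"
  proof (rule sum_mono)
    fix b :: 'a assume b: "b \<in> Basis"
    have "\<bar>of_int \<lfloor>m * (x \<bullet> b)\<rfloor> - m * (x \<bullet> b)\<bar> \<le> 1" by linarith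
    moreover have "of_int \<lfloor>m * (x \<bullet> b)\<rfloor> / m - x \<bullet> b = (of_int \<lfloor>m * (x \<bullet> b)\<rfloor> - m * (x \<bullet> b)) / m"
      using m by (simp add: field_simps)
    ultimately have "\<bar>of_int \<lfloor>m * (x \<bullet> b)\<rfloor> / m - x \<bullet> b\<bar> \<le> 1 / m"
      using m by (simp add: abs_div_pos divide_right_mono)
    then show "norm ((of_int \<lfloor>m * (x \<bullet> b)\<rfloor> / m - x \<bullet> b) *\<^sub>R b) \<le> 1 / m"
      using b by simp
  qed
  also have "\<dots> = real DIM('a) / real (Suc n)" unfolding m_def by simp
  finally show ?thesis .
qed

lemma grid_round_tendsto: "(\<lambda>n. grid_round n x) \<longlonglongrightarrow> (x::'a::euclidean_space)"
proof -
  have "(\<lambda>n. real DIM('a) / real (Suc n)) \<longlonglongrightarrow> 0"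
    using LIMSEQ_Suc[OF lim_const_over_n[of "real DIM('a)"]] by simp
  then have "(\<lambda>n. norm (grid_round n x - x)) \<longlonglongrightarrow> 0"
    by (rule Lim_null_comparison[rotated])
      (rule always_eventually, use norm_grid_round_diff_le[where 'a='a] in simp)
  then show ?thesis by (simp add: tendsto_norm_zero_iff LIM_zero_iff)
qed

text \<open>Approximate \<open>X\<close> by the countably-valued maps \<open>grid_round n \<circ> X\<close>, on whose level sets
  the composition is measurable in \<open>Z\<close>; continuity in the second argument passes to the limit.\<close>

lemma borel_measurable_caratheodory:
  fixes h :: "'b \<Rightarrow> 'a::euclidean_space \<Rightarrow> 'c::metric_space"
  assumes cont: "\<And>z. continuous_on UNIV (h z)"
    and meas: "\<And>x. (\<lambda>z. h z x) \<in> borel_measurable P"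
    and Z: "Z \<in> measurable M P" and X: "X \<in> borel_measurable M"
  shows "(\<lambda>w. h (Z w) (X w)) \<in> borel_measurable M"
proof (rule borel_measurable_LIMSEQ_metric)
  fix n
  have cnt: "countable (range (grid_round n :: 'a \<Rightarrow> 'a))" by (rule countable_range_grid_round)
  have "(\<lambda>w. grid_round n (X w)) \<in> borel_measurable M"
    using measurable_comp[OF X borel_measurable_grid_round] by (simp add: comp_def)
  then have "(\<lambda>w. grid_round n (X w)) \<in> measurable M (count_space (range (grid_round n)))"
    by (subst measurable_count_space_eq_countable[OF cnt]) (auto intro: borel_measurable_vimage)
  moreover have "\<And>a. (\<lambda>w. h (Z w) a) \<in> borel_measurable M"
    by (rule measurable_compose[OF Z meas])
  ultimately show "(\<lambda>w. h (Z w) (grid_round n (X w))) \<in> borel_measurable M"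
    using measurable_compose_countable'[where f="\<lambda>a w. h (Z w) a", OF _ _ cnt] by blast
next
  fix w
  have "isCont (h (Z w)) (X w)" using cont continuous_on_eq_continuous_at by blast
  then show "(\<lambda>n. h (Z w) (grid_round n (X w))) \<longlonglongrightarrow> h (Z w) (X w)"
    by (rule isCont_tendsto_compose) (rule grid_round_tendsto)
qed

section \<open>Integration over product measures\<close>

lemma
  fixes f :: "'b \<Rightarrow> real"
  assumes "prob_space P" and "k \<in> I" and "f \<in> borel_measurable P"
  shows integrable_PiM_component_iff:
      "integrable (PiM I (\<lambda>_. P)) (\<lambda>y. f (y k)) \<longleftrightarrow> integrable P f"
    and integral_PiM_component: "(\<integral>y. f (y k) \<partial>PiM I (\<lambda>_. P)) = (\<integral>z. f z \<partial>P)"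
proof -
  have distr: "distr (PiM I (\<lambda>_. P)) P (\<lambda>y. y k) = P"
    using distr_PiM_component[of I "\<lambda>_. P" k] assms by simp
  have meas: "(\<lambda>y. y k) \<in> measurable (PiM I (\<lambda>_. P)) P"
    using assms(2) by (rule measurable_component_singleton)
  show "integrable (PiM I (\<lambda>_. P)) (\<lambda>y. f (y k)) \<longleftrightarrow> integrable P f"
    using integrable_distr_eq[OF meas, of f] assms(3) distr by simp
  show "(\<integral>y. f (y k) \<partial>PiM I (\<lambda>_. P)) = (\<integral>z. f z \<partial>P)"
    using integral_distr[OF meas, of f] assms(3) distr by simp
qed

lemma integral_PiM_fresh_coordinate:
  fixes h :: "'b \<Rightarrow> 'c \<Rightarrow> real" and X :: "('i \<Rightarrow> 'b) \<Rightarrow> 'c"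
  assumes P: "prob_space P" and I: "finite I" "k \<in> I"
    and X_indep: "\<And>y z. X (y(k := z)) = X y"
    and integrable: "integrable (PiM I (\<lambda>_. P)) (\<lambda>y. h (y k) (X y))"
  shows "(\<integral>y. h (y k) (X y) \<partial>PiM I (\<lambda>_. P))
    = (\<integral>y. (\<integral>z. h z (X y) \<partial>P) \<partial>PiM (I - {k}) (\<lambda>_. P))"
proof -
  interpret product_prob_space "\<lambda>_. P" I
    by (simp add: product_prob_space_def product_prob_space_axioms_def P
        product_sigma_finite_def prob_space_imp_sigma_finite)
  have "I = insert k (I - {k})" using I by auto
  then show ?thesis
    using product_integral_insert[of "I - {k}" k "\<lambda>y. h (y k) (X y)"] I integrable
    by (simp add: X_indep)
qed

lemma integral_PiM_fresh_coordinate_eq: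
  fixes h :: "'b \<Rightarrow> 'c \<Rightarrow> real" and X :: "('i \<Rightarrow> 'b) \<Rightarrow> 'c"
  assumes P: "prob_space P" and I: "finite I" "k \<in> I"
    and X_indep: "\<And>y z. X (y(k := z)) = X y"
    and H: "\<And>x. (\<integral>z. h z x \<partial>P) = H x"
    and "integrable (PiM I (\<lambda>_. P)) (\<lambda>y. h (y k) (X y))"
    and "integrable (PiM I (\<lambda>_. P)) (\<lambda>y. H (X y))"
  shows "(\<integral>y. h (y k) (X y) \<partial>PiM I (\<lambda>_. P)) = (\<integral>y. H (X y) \<partial>PiM I (\<lambda>_. P))"
proof -
  have "(\<integral>y. h (y k) (X y) \<partial>PiM I (\<lambda>_. P)) = (\<integral>y. (\<integral>z. H (X y) \<partial>P) \<partial>PiM (I - {k}) (\<lambda>_. P))"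
    using integral_PiM_fresh_coordinate[OF assms(1-4,6)] by (simp add: H prob_space.prob_space[OF P])
  also have "\<dots> = (\<integral>y. H (X y) \<partial>PiM I (\<lambda>_. P))"
    using integral_PiM_fresh_coordinate[of P I k X "\<lambda>_. H"] assms(1-4,7) by simp
  finally show ?thesis .
qed

lemma integral_PiM_fresh_coordinate_le:
  fixes h :: "'b \<Rightarrow> 'c \<Rightarrow> real" and X :: "('i \<Rightarrow> 'b) \<Rightarrow> 'c"
  assumes P: "prob_space P" and I: "finite I" "k \<in> I"
    and X_indep: "\<And>y z. X (y(k := z)) = X y"
    and bound: "\<And>x. (\<integral>z. h z x \<partial>P) \<le> c" and c: "0 \<le> c"
    and "integrable (PiM I (\<lambda>_. P)) (\<lambda>y. h (y k) (X y))"
  shows "(\<integral>y. h (y k) (X y) \<partial>PiM I (\<lambda>_. P)) \<le> c"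
proof -
  interpret Q: prob_space "PiM (I - {k}) (\<lambda>_. P)" by (rule prob_space_PiM) (rule P)
  have "(\<integral>y. (\<integral>z. h z (X y) \<partial>P) \<partial>PiM (I - {k}) (\<lambda>_. P)) \<le> c"
  proof (cases "integrable (PiM (I - {k}) (\<lambda>_. P)) (\<lambda>y. \<integral>z. h z (X y) \<partial>P)")
    case True
    then have "(\<integral>y. (\<integral>z. h z (X y) \<partial>P) \<partial>PiM (I - {k}) (\<lambda>_. P)) \<le> (\<integral>y. c \<partial>PiM (I - {k}) (\<lambda>_. P))"
      by (intro integral_mono) (auto intro: bound)
    then show ?thesis by (simp add: Q.prob_space)
  qed (simp add: not_integrable_integral_eq c)
  then show ?thesis using integral_PiM_fresh_coordinate[OF assms(1-4,7)] by simp
qed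

lemma integral_double_sum:
  fixes f :: "'i \<Rightarrow> 'j \<Rightarrow> 'w \<Rightarrow> real"
  assumes "\<And>i j. i \<in> A \<Longrightarrow> j \<in> B \<Longrightarrow> integrable M (f i j)"
  shows "(\<integral>x. (\<Sum>i\<in>A. \<Sum>j\<in>B. f i j x) \<partial>M) = (\<Sum>i\<in>A. \<Sum>j\<in>B. (\<integral>x. f i j x \<partial>M))"
  using assms by (simp add: Bochner_Integration.integral_sum Bochner_Integration.integrable_sum)

definition square_integrable :: "'w measure \<Rightarrow> ('w \<Rightarrow> 'a::real_normed_vector) \<Rightarrow> bool" where
  "square_integrable M f \<longleftrightarrow> f \<in> borel_measurable M \<and> integrable M (\<lambda>y. (norm (f y))\<^sup>2)"

lemma norm_add_sq_le: "(norm (a + b))\<^sup>2 \<le> 2 * (norm a)\<^sup>2 + 2 * (norm (b::'a::real_normed_vector))\<^sup>2"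
proof -
  have "(norm (a + b))\<^sup>2 \<le> (norm a + norm b)\<^sup>2"
    by (simp add: power_mono norm_triangle_ineq)
  also have "\<dots> \<le> 2 * (norm a)\<^sup>2 + 2 * (norm b)\<^sup>2"
    using sum_squares_bound[of "norm a" "norm b"] by (simp add: power2_eq_square algebra_simps)
  finally show ?thesis .
qed

lemma square_integrable_norm_le:
  assumes "f \<in> borel_measurable M" "square_integrable M u" "\<And>y. norm (f y) \<le> norm (u y)"
  shows "square_integrable M f"
  unfolding square_integrable_def
proof
  show "integrable M (\<lambda>y. (norm (f y))\<^sup>2)"
  proof (rule Bochner_Integration.integrable_bound)
    show "integrable M (\<lambda>y. (norm (u y))\<^sup>2)" using assms(2) unfolding square_integrable_def by simp
    show "AE y in M. norm ((norm (f y))\<^sup>2) \<le> norm ((norm (u y))\<^sup>2)"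
      using assms(3) by (intro AE_I2) (simp add: power_mono)
  qed (use assms(1) in measurable)
qed fact

lemma square_integrable_norm: "square_integrable M f \<Longrightarrow> square_integrable M (\<lambda>y. norm (f y))"
  unfolding square_integrable_def by auto

lemma integrable_norm_sq: "square_integrable M f \<Longrightarrow> integrable M (\<lambda>y. (norm (f y))\<^sup>2)"
  unfolding square_integrable_def by simp

context finite_measure
begin

lemma square_integrable_const: "square_integrable M (\<lambda>y. c)"
  unfolding square_integrable_def by simp

lemma square_integrable_add:
  fixes f g :: "'a \<Rightarrow> 'v::euclidean_space"
  assumes "square_integrable M f" "square_integrable M g"
  shows "square_integrable M (\<lambda>y. f y + g y)"
  unfolding square_integrable_def
proof
  show meas: "(\<lambda>y. f y + g y) \<in> borel_measurable M"
    using assms unfolding square_integrable_def by (simp add: borel_measurable_add)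
  show "integrable M (\<lambda>y. (norm (f y + g y))\<^sup>2)"
  proof (rule Bochner_Integration.integrable_bound)
    show "integrable M (\<lambda>y. 2 * (norm (f y))\<^sup>2 + 2 * (norm (g y))\<^sup>2)"
      using assms unfolding square_integrable_def by simp
    show "AE x in M. norm ((norm (f x + g x))\<^sup>2) \<le> norm (2 * (norm (f x))\<^sup>2 + 2 * (norm (g x))\<^sup>2)"
      by (intro AE_I2) (simp add: norm_add_sq_le)
  qed (use meas in measurable)
qed

lemma square_integrable_scaleR:
  fixes f :: "'a \<Rightarrow> 'v::euclidean_space"
  assumes "square_integrable M f" shows "square_integrable M (\<lambda>y. c *\<^sub>R f y)"
  using assms unfolding square_integrable_def by (simp add: power_mult_distrib borel_measurable_scaleR)

lemma square_integrable_mult: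
  fixes f :: "'a \<Rightarrow> real"
  assumes "square_integrable M f" shows "square_integrable M (\<lambda>y. c * f y)"
  using square_integrable_scaleR[OF assms, of c] by simp

lemma square_integrable_diff:
  fixes f g :: "'a \<Rightarrow> 'v::euclidean_space"
  assumes "square_integrable M f" "square_integrable M g"
  shows "square_integrable M (\<lambda>y. f y - g y)"
  using square_integrable_add[OF assms(1) square_integrable_scaleR[OF assms(2), of "-1"]] by simp

lemma square_integrable_sum:
  fixes f :: "'i \<Rightarrow> 'a \<Rightarrow> 'v::euclidean_space"
  shows "(\<And>i. i \<in> A \<Longrightarrow> square_integrable M (f i)) \<Longrightarrow> square_integrable M (\<lambda>y. \<Sum>i\<in>A. f i y)"
  by (induction A rule: infinite_finite_induct)
    (auto intro: square_integrable_add simp: square_integrable_const)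

lemma integrable_inner:
  fixes f g :: "'a \<Rightarrow> 'v::euclidean_space"
  assumes "square_integrable M f" "square_integrable M g"
  shows "integrable M (\<lambda>y. f y \<bullet> g y)"
proof (rule Bochner_Integration.integrable_bound)
  show "integrable M (\<lambda>y. (norm (f y))\<^sup>2 + (norm (g y))\<^sup>2)"
    using assms unfolding square_integrable_def by simp
  show "(\<lambda>y. f y \<bullet> g y) \<in> borel_measurable M"
    using assms unfolding square_integrable_def by (simp add: borel_measurable_inner)
  have "\<bar>f y \<bullet> g y\<bar> \<le> (norm (f y))\<^sup>2 + (norm (g y))\<^sup>2" for y
    using Cauchy_Schwarz_ineq2[of "f y" "g y"] sum_squares_bound[of "norm (f y)" "norm (g y)"]
      mult_nonneg_nonneg[OF norm_ge_zero norm_ge_zero, of "f y" "g y"]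
    by linarith
  then show "AE y in M. norm (f y \<bullet> g y) \<le> norm ((norm (f y))\<^sup>2 + (norm (g y))\<^sup>2)"
    by (intro AE_I2) simp
qed

end

section \<open>Convex functions with Lipschitz gradient\<close>

lemma has_derivative_along_line:
  fixes f :: "'a::real_inner \<Rightarrow> real"
  assumes "\<And>p. (f has_derivative (\<lambda>h. G p \<bullet> h)) (at p)"
  shows "((\<lambda>t. f (x + t *\<^sub>R v)) has_derivative (\<lambda>h. h * (G (x + t *\<^sub>R v) \<bullet> v))) (at t within S)"
proof -
  have "((\<lambda>t. x + t *\<^sub>R v) has_derivative (\<lambda>h. h *\<^sub>R v)) (at t within S)"
    by (auto intro!: derivative_eq_intros)
  from has_derivative_compose[OF this assms]
  show ?thesis by (simp add: mult.commute)
qed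

lemma convex_on_ge_linearization:
  fixes f :: "'a::real_inner \<Rightarrow> real"
  assumes deriv: "\<And>p. (f has_derivative (\<lambda>h. G p \<bullet> h)) (at p)"
    and convex: "convex_on UNIV f"
  shows "f x + G x \<bullet> (y - x) \<le> f y"
proof -
  define \<phi> where "\<phi> t = f (x + t *\<^sub>R (y - x))" for t :: real
  have "convex_on UNIV \<phi>"
  proof (rule convex_onI)
    fix u a b :: real
    have "x + ((1 - u) *\<^sub>R a + u *\<^sub>R b) *\<^sub>R (y - x)
        = (1 - u) *\<^sub>R (x + a *\<^sub>R (y - x)) + u *\<^sub>R (x + b *\<^sub>R (y - x))"
      by (simp add: algebra_simps)
    moreover assume "0 < u" "u < 1"
    ultimately show "\<phi> ((1 - u) *\<^sub>R a + u *\<^sub>R b) \<le> (1 - u) * \<phi> a + u * \<phi> b"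
      unfolding \<phi>_def using convex_onD[OF convex, of u] by simp
  qed simp
  moreover have "(\<phi> has_field_derivative (G (x + 0 *\<^sub>R (y - x)) \<bullet> (y - x))) (at 0)"
    unfolding \<phi>_def by (rule has_derivative_imp_has_field_derivative[OF has_derivative_along_line[OF deriv]]) simp
  ultimately have "\<phi> 1 - \<phi> 0 \<ge> G x \<bullet> (y - x) * (1 - 0)"
    by (intro convex_on_imp_above_tangent) auto
  then show ?thesis unfolding \<phi>_def by simp
qed

lemma lipschitz_gradient_le_quadratic:
  fixes f :: "'a::real_inner \<Rightarrow> real"
  assumes deriv: "\<And>p. (f has_derivative (\<lambda>h. G p \<bullet> h)) (at p)"
    and lip: "\<And>p q. norm (G p - G q) \<le> L * norm (p - q)" and "0 \<le> L"
  shows "f y \<le> f x + G x \<bullet> (y - x) + L * (norm (y - x))\<^sup>2"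
proof -
  define v where "v = y - x"
  define \<phi> where "\<phi> t = f (x + t *\<^sub>R v)" for t :: real
  have \<phi>': "\<And>t. (\<phi> has_derivative (\<lambda>h. h * (G (x + t *\<^sub>R v) \<bullet> v))) (at t)"
    unfolding \<phi>_def by (rule has_derivative_along_line[OF deriv])
  then have "continuous_on {0..1} \<phi>"
    by (meson continuous_at_imp_continuous_on has_derivative_continuous)
  then obtain t where t: "0 < t" "t < 1" and mvt: "\<phi> 1 - \<phi> 0 = G (x + t *\<^sub>R v) \<bullet> v"
    using mvt[of 0 1 \<phi> "\<lambda>t h. h * (G (x + t *\<^sub>R v) \<bullet> v)"] \<phi>' by auto
  have "(G (x + t *\<^sub>R v) - G x) \<bullet> v \<le> norm (G (x + t *\<^sub>R v) - G x) * norm v"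
    by (rule Cauchy_Schwarz_ineq2[THEN abs_le_D1])
  also have "\<dots> \<le> (L * (t * norm v)) * norm v"
    using lip[of "x + t *\<^sub>R v" x] t by (intro mult_right_mono) auto
  also have "\<dots> = L * (t * (norm v)\<^sup>2)" by (simp add: power2_eq_square)
  also have "\<dots> \<le> L * (norm v)\<^sup>2"
    using t \<open>0 \<le> L\<close> by (intro mult_left_mono mult_left_le_one_le) auto
  finally show ?thesis using mvt unfolding \<phi>_def v_def by (simp add: inner_diff_left)
qed

lemma abs_le_of_quadratic_bounds:
  fixes f :: "'a::real_inner \<Rightarrow> real"
  assumes "f 0 + G \<bullet> x \<le> f x" "f x \<le> f 0 + G \<bullet> x + L * (norm x)\<^sup>2" "0 \<le> L"
  shows "\<bar>f x\<bar> \<le> \<bar>f 0\<bar> + (norm G)\<^sup>2 + (1 + L) * (norm x)\<^sup>2"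
proof -
  have "\<bar>G \<bullet> x\<bar> \<le> (norm G)\<^sup>2 + (norm x)\<^sup>2"
    using Cauchy_Schwarz_ineq2[of G x] sum_squares_bound[of "norm G" "norm x"]
      mult_nonneg_nonneg[OF norm_ge_zero norm_ge_zero, of G x] by linarith
  moreover have "0 \<le> L * (norm x)\<^sup>2" using assms(3) by simp
  ultimately show ?thesis using assms(1,2) by (simp add: algebra_simps)
qed

locale stochastic_convex_problem =
  fixes P :: "'b measure" and loss :: "'b \<Rightarrow> 'a::euclidean_space \<Rightarrow> real" and g :: "'b \<Rightarrow> 'a \<Rightarrow> 'a"
    and gradF :: "'a \<Rightarrow> 'a" and xs :: 'a and L D \<sigma> :: real
  assumes P: "prob_space P"
    and grad: "\<And>z x. (loss z has_derivative (\<lambda>h. g z x \<bullet> h)) (at x)"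
    and convex: "\<And>z. convex_on UNIV (loss z)"
    and L_pos: "L > 0"
    and smooth: "\<And>z x y. norm (g z x - g z y) \<le> L * norm (x - y)"
    and loss_int: "\<And>x. integrable P (\<lambda>z. loss z x)"
    and g_meas: "\<And>x. (\<lambda>z. g z x) \<in> borel_measurable P"
    and D_int: "\<And>x. integrable P (\<lambda>z. (norm (g z x))\<^sup>2)"
    and D_bound: "\<And>x. (\<integral>z. (norm (g z x))\<^sup>2 \<partial>P) \<le> D"
    and gradF: "\<And>x. ((\<lambda>y. \<integral>z. loss z y \<partial>P) has_derivative (\<lambda>h. gradF x \<bullet> h)) (at x)"
    and \<sigma>_nonneg: "\<sigma> \<ge> 0"
    and var_int: "\<And>x. integrable P (\<lambda>z. (norm (g z x - gradF x))\<^sup>2)"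
    and var_bound: "\<And>x. (\<integral>z. (norm (g z x - gradF x))\<^sup>2 \<partial>P) \<le> \<sigma>\<^sup>2"
    and xs_min: "\<And>x. (\<integral>z. loss z xs \<partial>P) \<le> (\<integral>z. loss z x \<partial>P)"
begin

definition F :: "'a \<Rightarrow> real" where "F x = (\<integral>z. loss z x \<partial>P)"

lemma F_min: "F xs \<le> F x"
  using xs_min unfolding F_def by blast

lemma D_nonneg: "0 \<le> D"
proof -
  have "0 \<le> (\<integral>z. (norm (g z 0))\<^sup>2 \<partial>P)" by (rule integral_nonneg_AE) simp
  then show ?thesis using D_bound[of 0] by linarith
qed

lemma square_integrable_g: "square_integrable P (\<lambda>z. g z x)"
  unfolding square_integrable_def using g_meas D_int by simp

lemma integrable_g: "integrable P (\<lambda>z. g z x)"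
proof (rule Bochner_Integration.integrable_bound)
  interpret prob_space P by (rule P)
  show "integrable P (\<lambda>z. 1 + (norm (g z x))\<^sup>2)"
    using D_int by simp
  have "norm (g z x) \<le> 1 + (norm (g z x))\<^sup>2" for z
    using sum_squares_bound[of 1 "norm (g z x)"] norm_ge_zero[of "g z x"] by (simp del: norm_ge_zero)
  then show "AE z in P. norm (g z x) \<le> norm (1 + (norm (g z x))\<^sup>2)"
    by (intro AE_I2) simp
qed (rule g_meas)

lemma loss_ge_linearization: "loss z x + g z x \<bullet> (y - x) \<le> loss z y"
  by (rule convex_on_ge_linearization[OF grad convex])

lemma loss_le_quadratic: "loss z y \<le> loss z x + g z x \<bullet> (y - x) + L * (norm (y - x))\<^sup>2"
  using L_pos by (intro lipschitz_gradient_le_quadratic[OF grad smooth]) auto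

lemma norm_g_le: "norm (g z x) \<le> norm (g z 0) + L * norm x"
  using smooth[of z x 0] norm_triangle_ineq2[of "g z x" "g z 0"] by simp

lemma continuous_on_g: "continuous_on UNIV (g z)"
  using smooth L_pos by (intro lipschitz_on_continuous_on[of L]) (auto simp: lipschitz_on_def dist_norm)

lemma continuous_on_loss: "continuous_on UNIV (loss z)"
  using grad by (meson continuous_at_imp_continuous_on has_derivative_continuous)

lemma borel_measurable_loss: "(\<lambda>z. loss z x) \<in> borel_measurable P"
  using loss_int by auto

lemma abs_loss_le: "\<bar>loss z x\<bar> \<le> \<bar>loss z 0\<bar> + (norm (g z 0))\<^sup>2 + (1 + L) * (norm x)\<^sup>2"
  using loss_ge_linearization[of z 0 x] loss_le_quadratic[of z x 0] L_pos
  by (intro abs_le_of_quadratic_bounds) auto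

lemma integral_g_eq_gradF: "(\<integral>z. g z x \<partial>P) = gradF x"
proof -
  define c where "c = (\<integral>z. g z x \<partial>P)"
  define \<phi> where "\<phi> y = F y - c \<bullet> y" for y
  have "F x + c \<bullet> (y - x) \<le> F y" for y
  proof -
    have "F x + c \<bullet> (y - x) = (\<integral>z. loss z x + g z x \<bullet> (y - x) \<partial>P)"
      unfolding F_def c_def using loss_int integrable_g by simp
    also have "\<dots> \<le> F y" unfolding F_def
      using loss_int integrable_g by (intro integral_mono) (auto intro: loss_ge_linearization)
    finally show ?thesis .
  qed
  then have "\<forall>\<^sub>F y in at x. \<phi> x \<le> \<phi> y"
    unfolding \<phi>_def by (intro always_eventually allI) (smt (verit) inner_diff_right)
  moreover have "(\<phi> has_derivative (\<lambda>h. gradF x \<bullet> h - c \<bullet> h)) (at x)"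
    unfolding \<phi>_def F_def by (intro has_derivative_diff gradF has_derivative_inner_right has_derivative_ident)
  ultimately have "(\<lambda>h. gradF x \<bullet> h - c \<bullet> h) = (\<lambda>h. 0)"
    by (rule has_derivative_local_min[rotated])
  then have "(gradF x - c) \<bullet> (gradF x - c) = 0"
    by (metis inner_diff_left)
  then show ?thesis unfolding c_def by simp
qed

lemma F_ge_linearization: "F x + gradF x \<bullet> (y - x) \<le> F y"
proof -
  have "F x + gradF x \<bullet> (y - x) = (\<integral>z. loss z x + g z x \<bullet> (y - x) \<partial>P)"
    unfolding F_def integral_g_eq_gradF[symmetric] using loss_int integrable_g by simp
  also have "\<dots> \<le> F y" unfolding F_def
    using loss_int integrable_g by (intro integral_mono) (auto intro: loss_ge_linearization)
  finally show ?thesis .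
qed

lemma F_le_quadratic: "F y \<le> F x + gradF x \<bullet> (y - x) + L * (norm (y - x))\<^sup>2"
proof -
  interpret prob_space P by (rule P)
  have "F y \<le> (\<integral>z. loss z x + g z x \<bullet> (y - x) + L * (norm (y - x))\<^sup>2 \<partial>P)" unfolding F_def
    using loss_int integrable_g by (intro integral_mono) (auto intro: loss_le_quadratic)
  also have "\<dots> = F x + gradF x \<bullet> (y - x) + L * (norm (y - x))\<^sup>2"
    unfolding F_def integral_g_eq_gradF[symmetric] using loss_int integrable_g by (simp add: prob_space)
  finally show ?thesis .
qed

lemma gradF_lipschitz: "norm (gradF p - gradF q) \<le> L * norm (p - q)"
proof -
  interpret prob_space P by (rule P)
  have "norm (gradF p - gradF q) = norm (\<integral>z. g z p - g z q \<partial>P)"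
    unfolding integral_g_eq_gradF[symmetric] using integrable_g by simp
  also have "\<dots> \<le> (\<integral>z. norm (g z p - g z q) \<partial>P)" by (rule integral_norm_bound)
  also have "\<dots> \<le> (\<integral>z. L * norm (p - q) \<partial>P)"
    using integrable_g by (intro integral_mono) (auto intro: smooth)
  finally show ?thesis by (simp add: prob_space)
qed

lemma norm_gradF_le: "norm (gradF x) \<le> norm (gradF 0) + L * norm x"
  using gradF_lipschitz[of x 0] norm_triangle_ineq2[of "gradF x" "gradF 0"] by simp

lemma continuous_on_gradF: "continuous_on UNIV gradF"
  using gradF_lipschitz L_pos
  by (intro lipschitz_on_continuous_on[of L]) (auto simp: lipschitz_on_def dist_norm)

lemma continuous_on_F: "continuous_on UNIV F"
  using gradF unfolding F_def
  by (meson continuous_at_imp_continuous_on has_derivative_continuous)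

lemma abs_F_le: "\<bar>F x\<bar> \<le> \<bar>F 0\<bar> + (norm (gradF 0))\<^sup>2 + (1 + L) * (norm x)\<^sup>2"
  using F_ge_linearization[of 0 x] F_le_quadratic[of x 0] L_pos
  by (intro abs_le_of_quadratic_bounds) auto

text \<open>Minimizing the quadratic upper bound of \<open>F\<close> at \<open>x\<close> gives a point \<open>y\<close>
  with \<open>F xs \<le> F y \<le> F x - \<parallel>gradF x\<parallel>\<^sup>2 / (4 L)\<close>.\<close>

lemma norm_gradF_sq_le: "(norm (gradF x))\<^sup>2 \<le> 4 * L * (F x - F xs)"
proof -
  define y where "y = x - (1 / (2 * L)) *\<^sub>R gradF x"
  have "F xs \<le> F y" by (rule F_min)
  also have "\<dots> \<le> F x + gradF x \<bullet> (y - x) + L * (norm (y - x))\<^sup>2" by (rule F_le_quadratic)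
  also have "\<dots> = F x - (norm (gradF x))\<^sup>2 / (4 * L)"
  proof -
    have "gradF x \<bullet> (y - x) = - (norm (gradF x))\<^sup>2 / (2 * L)"
      unfolding y_def by (simp add: power2_norm_eq_inner)
    moreover have "(norm (y - x))\<^sup>2 = (norm (gradF x))\<^sup>2 / (4 * L\<^sup>2)"
      unfolding y_def using L_pos by (simp add: power_mult_distrib power_divide)
    ultimately show ?thesis using L_pos by (simp add: field_simps power2_eq_square)
  qed
  finally show ?thesis using L_pos by (simp add: field_simps)
qed

end

section \<open>Consensus error and gossip\<close>

definition avg :: "nat \<Rightarrow> (nat \<Rightarrow> 'a::real_vector) \<Rightarrow> 'a" where
  "avg N v = (1 / real N) *\<^sub>R (\<Sum>i<N. v i)"

definition consensus_error :: "nat \<Rightarrow> (nat \<Rightarrow> 'a::real_normed_vector) \<Rightarrow> real" where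
  "consensus_error N v = (\<Sum>i<N. (norm (v i - avg N v))\<^sup>2)"

definition gossip :: "(nat \<Rightarrow> nat \<Rightarrow> real) \<Rightarrow> nat \<Rightarrow> (nat \<Rightarrow> 'a::real_vector) \<Rightarrow> nat \<Rightarrow> 'a" where
  "gossip W N v i = (\<Sum>j<N. W i j *\<^sub>R v j)"

lemma avg_add: "avg N (\<lambda>i. u i + v i) = avg N u + avg N v"
  unfolding avg_def by (simp add: sum.distrib scaleR_add_right)

lemma avg_diff: "avg N (\<lambda>i. u i - v i) = avg N u - avg N v"
  unfolding avg_def by (simp add: sum_subtractf scaleR_diff_right)

lemma avg_scaleR: "avg N (\<lambda>i. c *\<^sub>R v i) = c *\<^sub>R avg N v"
  unfolding avg_def by (simp add: scaleR_sum_right[symmetric])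

lemma avg_cong: "(\<And>i. i < N \<Longrightarrow> u i = v i) \<Longrightarrow> avg N u = avg N v"
  unfolding avg_def by simp

lemma sum_eq_avg: "N \<noteq> 0 \<Longrightarrow> (\<Sum>i<N. v i) = real N *\<^sub>R avg N v"
  unfolding avg_def by simp

lemma avg_gossip:
  assumes "\<forall>j<N. (\<Sum>i<N. W i j) = 1"
  shows "avg N (gossip W N v) = avg N v"
proof -
  have "(\<Sum>i<N. \<Sum>j<N. W i j *\<^sub>R v j) = (\<Sum>j<N. (\<Sum>i<N. W i j) *\<^sub>R v j)"
    by (subst sum.swap) (simp add: scaleR_sum_left)
  also have "\<dots> = (\<Sum>j<N. v j)" using assms by simp
  finally show ?thesis unfolding avg_def gossip_def by simp
qed

lemma norm_add_sq_le_weighted: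
  fixes a b :: "'a::real_inner"
  assumes "e > 0"
  shows "(norm (a + b))\<^sup>2 \<le> (1 + e) * (norm a)\<^sup>2 + (1 + 1 / e) * (norm b)\<^sup>2"
proof -
  have "2 * (norm a * norm b) \<le> e * (norm a)\<^sup>2 + (norm b)\<^sup>2 / e"
  proof -
    have "0 \<le> (e * norm a - norm b)\<^sup>2 / e" using assms by simp
    also have "\<dots> = e * (norm a)\<^sup>2 - 2 * (norm a * norm b) + (norm b)\<^sup>2 / e"
      using assms by (simp add: power2_eq_square field_simps)
    finally show ?thesis by linarith
  qed
  moreover have "(norm (a + b))\<^sup>2 = (norm a)\<^sup>2 + 2 * (a \<bullet> b) + (norm b)\<^sup>2"
    by (simp add: power2_norm_eq_inner inner_add_left inner_add_right inner_commute)
  moreover have "a \<bullet> b \<le> norm a * norm b" by (rule Cauchy_Schwarz_ineq2[THEN abs_le_D1])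
  ultimately show ?thesis by (simp add: algebra_simps)
qed

lemma consensus_error_nonneg: "0 \<le> consensus_error N v"
  unfolding consensus_error_def by (simp add: sum_nonneg)

lemma consensus_error_scaleR: "consensus_error N (\<lambda>i. c *\<^sub>R v i) = c\<^sup>2 * consensus_error N v"
  unfolding consensus_error_def avg_scaleR
  by (simp add: sum_distrib_left scaleR_diff_right[symmetric] power_mult_distrib)

lemma consensus_error_add_le:
  fixes u v :: "nat \<Rightarrow> 'a::real_inner"
  assumes "e > 0"
  shows "consensus_error N (\<lambda>i. u i + v i) \<le> (1 + e) * consensus_error N u + (1 + 1 / e) * consensus_error N v"
proof -
  have "consensus_error N (\<lambda>i. u i + v i) = (\<Sum>i<N. (norm ((u i - avg N u) + (v i - avg N v)))\<^sup>2)"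
    unfolding consensus_error_def avg_add by (simp add: algebra_simps)
  also have "\<dots> \<le> (\<Sum>i<N. (1 + e) * (norm (u i - avg N u))\<^sup>2 + (1 + 1 / e) * (norm (v i - avg N v))\<^sup>2)"
    by (intro sum_mono norm_add_sq_le_weighted assms)
  finally show ?thesis
    unfolding consensus_error_def by (simp add: sum.distrib sum_distrib_left)
qed

lemma consensus_error_eq:
  fixes v :: "nat \<Rightarrow> 'a::real_inner"
  shows "consensus_error N v = (\<Sum>i<N. (norm (v i))\<^sup>2) - real N * (norm (avg N v))\<^sup>2"
proof (cases "N = 0")
  case False
  define m where "m = avg N v"
  have "consensus_error N v = (\<Sum>i<N. (norm (v i))\<^sup>2 - 2 * (v i \<bullet> m) + (norm m)\<^sup>2)"
    unfolding consensus_error_def m_def[symmetric]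
    by (intro sum.cong refl) (simp add: power2_norm_eq_inner inner_diff_left inner_diff_right inner_commute)
  also have "\<dots> = (\<Sum>i<N. (norm (v i))\<^sup>2) - 2 * ((\<Sum>i<N. v i) \<bullet> m) + real N * (norm m)\<^sup>2"
    by (simp add: sum.distrib sum_subtractf sum_distrib_left inner_sum_left)
  finally show ?thesis
    unfolding sum_eq_avg[OF False] m_def by (simp add: power2_norm_eq_inner)
qed (simp add: consensus_error_def)

lemma consensus_error_le_sum_sq:
  fixes v :: "nat \<Rightarrow> 'a::real_inner"
  shows "consensus_error N v \<le> (\<Sum>i<N. (norm (v i))\<^sup>2)"
  unfolding consensus_error_eq by simp

lemma norm_avg_sq_le:
  fixes v :: "nat \<Rightarrow> 'a::real_inner"
  assumes "N \<ge> 1"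
  shows "(norm (avg N v))\<^sup>2 \<le> (1 / real N) * (\<Sum>i<N. (norm (v i))\<^sup>2)"
  using consensus_error_nonneg[of N v] assms unfolding consensus_error_eq by (simp add: field_simps)

lemma consensus_error_diff_le:
  fixes a b :: "nat \<Rightarrow> 'a::real_inner"
  shows "consensus_error N (\<lambda>i. a i - b i) \<le> 2 * (\<Sum>i<N. (norm (a i))\<^sup>2) + 2 * (\<Sum>i<N. (norm (b i))\<^sup>2)"
proof -
  have "consensus_error N (\<lambda>i. a i - b i) \<le> (\<Sum>i<N. (norm (a i - b i))\<^sup>2)"
    by (rule consensus_error_le_sum_sq)
  also have "\<dots> \<le> (\<Sum>i<N. 2 * (norm (a i))\<^sup>2 + 2 * (norm (b i))\<^sup>2)"
    using norm_add_sq_le[of "a i" "- b i" for i] by (intro sum_mono) simp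
  finally show ?thesis by (simp add: sum.distrib sum_distrib_left)
qed

lemma bdd_above_spec_norm:
  fixes A :: "nat \<Rightarrow> nat \<Rightarrow> real"
  shows "bdd_above {sqrt (\<Sum>i<N. (\<Sum>j<N. A i j * v j)\<^sup>2) | v. (\<Sum>j<N. (v j)\<^sup>2) = 1}"
proof (rule bdd_aboveI, safe)
  fix v :: "nat \<Rightarrow> real" assume v: "(\<Sum>j<N. (v j)\<^sup>2) = 1"
  have "\<bar>v j\<bar> \<le> 1" if "j < N" for j
  proof -
    have "(v j)\<^sup>2 \<le> (\<Sum>j<N. (v j)\<^sup>2)" using that by (intro member_le_sum) auto
    then have "(v j)\<^sup>2 \<le> 1" using v by simp
    then show ?thesis by (simp add: abs_square_le_1)
  qed
  then have "\<bar>\<Sum>j<N. A i j * v j\<bar> \<le> (\<Sum>j<N. \<bar>A i j\<bar>)" for i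
    by (intro order.trans[OF sum_abs] sum_mono) (simp add: abs_mult mult_left_le)
  then have "(\<Sum>j<N. A i j * v j)\<^sup>2 \<le> (\<Sum>j<N. \<bar>A i j\<bar>)\<^sup>2" for i
    by (metis abs_le_square_iff abs_sum_abs)
  then show "sqrt (\<Sum>i<N. (\<Sum>j<N. A i j * v j)\<^sup>2) \<le> sqrt (\<Sum>i<N. (\<Sum>j<N. \<bar>A i j\<bar>)\<^sup>2)"
    by (intro real_sqrt_le_mono sum_mono)
qed

lemma sum_sq_matrix_mult_le_spec_norm:
  fixes A :: "nat \<Rightarrow> nat \<Rightarrow> real"
  shows "(\<Sum>i<N. (\<Sum>j<N. A i j * w j)\<^sup>2) \<le> (spec_norm N A)\<^sup>2 * (\<Sum>j<N. (w j)\<^sup>2)"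
proof -
  define r where "r = sqrt (\<Sum>j<N. (w j)\<^sup>2)"
  have r2: "r\<^sup>2 = (\<Sum>j<N. (w j)\<^sup>2)" unfolding r_def by (simp add: sum_nonneg)
  show ?thesis
  proof (cases "r = 0")
    case True
    then have "\<forall>j\<in>{..<N}. (w j)\<^sup>2 = 0" using r2 by (subst sum_nonneg_eq_0_iff[symmetric]) auto
    then show ?thesis by (simp add: sum_nonneg)
  next
    case False
    then have r: "r > 0" unfolding r_def by (simp add: sum_nonneg less_le)
    define v where "v j = w j / r" for j
    have "(\<Sum>j<N. (v j)\<^sup>2) = r\<^sup>2 / r\<^sup>2"
      unfolding v_def r2 using r r2 by (simp add: power_divide sum_divide_distrib[symmetric])
    then have "(\<Sum>j<N. (v j)\<^sup>2) = 1" using r by simp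
    then have "sqrt (\<Sum>i<N. (\<Sum>j<N. A i j * v j)\<^sup>2) \<le> spec_norm N A"
      unfolding spec_norm_def by (intro cSup_upper bdd_above_spec_norm) blast
    then have "(sqrt (\<Sum>i<N. (\<Sum>j<N. A i j * v j)\<^sup>2))\<^sup>2 \<le> (spec_norm N A)\<^sup>2"
      by (intro power_mono) (auto intro: sum_nonneg)
    then have "(\<Sum>i<N. (\<Sum>j<N. A i j * v j)\<^sup>2) \<le> (spec_norm N A)\<^sup>2"
      by (simp add: sum_nonneg)
    moreover have "(\<Sum>i<N. (\<Sum>j<N. A i j * w j)\<^sup>2) = r\<^sup>2 * (\<Sum>i<N. (\<Sum>j<N. A i j * v j)\<^sup>2)"
    proof -
      have scale: "(\<Sum>j<N. A i j * w j) = r * (\<Sum>j<N. A i j * v j)" for i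
        unfolding v_def sum_distrib_left using r by (intro sum.cong) auto
      show ?thesis unfolding scale power_mult_distrib by (rule sum_distrib_left[symmetric])
    qed
    ultimately have "(\<Sum>i<N. (\<Sum>j<N. A i j * w j)\<^sup>2) \<le> r\<^sup>2 * (spec_norm N A)\<^sup>2"
      using mult_left_mono[OF _ zero_le_power2[of r]] by simp
    then show ?thesis unfolding r2 by (simp add: mult.commute)
  qed
qed

lemma gossip_deviation:
  assumes row: "\<forall>i<N. (\<Sum>j<N. W i j) = 1" and col: "\<forall>j<N. (\<Sum>i<N. W i j) = 1" and "i < N"
  shows "gossip W N v i - avg N (gossip W N v) = (\<Sum>j<N. (W i j - 1 / real N) *\<^sub>R (v j - avg N v))"
proof -
  have N: "N \<noteq> 0" using \<open>i < N\<close> by simp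
  have "(\<Sum>j<N. (W i j - 1 / real N) *\<^sub>R (v j - avg N v))
      = gossip W N v i - (\<Sum>j<N. W i j) *\<^sub>R avg N v - (1 / real N) *\<^sub>R (\<Sum>j<N. v j)
        + (1 / real N) *\<^sub>R (\<Sum>j<N. avg N v)"
    unfolding gossip_def
    by (simp add: algebra_simps sum_subtractf sum.distrib scaleR_sum_left scaleR_sum_right)
  also have "\<dots> = gossip W N v i - avg N v"
    using row \<open>i < N\<close> N by (simp add: avg_def sum_constant_scaleR)
  finally show ?thesis unfolding avg_gossip[OF col] ..
qed

lemma consensus_error_gossip_le:
  fixes v :: "nat \<Rightarrow> 'a::euclidean_space"
  assumes row: "\<forall>i<N. (\<Sum>j<N. W i j) = 1" and col: "\<forall>j<N. (\<Sum>i<N. W i j) = 1"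
  shows "consensus_error N (gossip W N v) \<le> (spec_norm N (\<lambda>i j. W i j - 1 / real N))\<^sup>2 * consensus_error N v"
proof -
  define A where "A i j = W i j - 1 / real N" for i j
  define u where "u j = v j - avg N v" for j
  have norm_sq: "(norm x)\<^sup>2 = (\<Sum>b\<in>Basis. (x \<bullet> b)\<^sup>2)" for x :: 'a
    unfolding power2_norm_eq_inner by (subst euclidean_inner) (simp add: power2_eq_square)
  have "consensus_error N (gossip W N v) = (\<Sum>i<N. (norm (\<Sum>j<N. A i j *\<^sub>R u j))\<^sup>2)"
    unfolding consensus_error_def A_def u_def by (intro sum.cong refl) (simp add: gossip_deviation[OF row col])
  also have "\<dots> = (\<Sum>b\<in>Basis. \<Sum>i<N. (\<Sum>j<N. A i j * (u j \<bullet> b))\<^sup>2)"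
    unfolding norm_sq by (simp add: inner_sum_left) (rule sum.swap)
  also have "\<dots> \<le> (\<Sum>b\<in>(Basis::'a set). (spec_norm N A)\<^sup>2 * (\<Sum>j<N. (u j \<bullet> b)\<^sup>2))"
    by (intro sum_mono sum_sq_matrix_mult_le_spec_norm)
  also have "\<dots> = (spec_norm N A)\<^sup>2 * consensus_error N v"
    unfolding consensus_error_def u_def norm_sq sum_distrib_left by (rule sum.swap)
  finally show ?thesis unfolding A_def .
qed

definition consensus_rate :: "real \<Rightarrow> real" where
  "consensus_rate \<rho> = (1 + \<rho>\<^sup>2) / 2"

definition consensus_gain :: "real \<Rightarrow> real" where
  "consensus_gain \<rho> = (1 + \<rho>\<^sup>2) / (1 - \<rho>\<^sup>2)"

lemma consensus_constants:
  assumes "0 < \<rho>" "\<rho> < 1"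
  shows "0 < consensus_rate \<rho>" "consensus_rate \<rho> < 1" "0 < consensus_gain \<rho>"
proof -
  have "\<rho>\<^sup>2 < 1" using assms by (simp add: power_less_one_iff)
  then show "0 < consensus_rate \<rho>" "consensus_rate \<rho> < 1" "0 < consensus_gain \<rho>"
    unfolding consensus_rate_def consensus_gain_def by (auto intro!: divide_pos_pos add_pos_nonneg)
qed

text \<open>Young's inequality with weight \<open>e = (1 - \<rho>\<^sup>2) / (2 \<rho>\<^sup>2)\<close>, chosen so that \<open>(1 + e) \<rho>\<^sup>2\<close>
  is the midpoint of \<open>\<rho>\<^sup>2\<close> and \<open>1\<close>.\<close>

lemma consensus_error_gossip_add_le:
  fixes v u :: "nat \<Rightarrow> 'a::euclidean_space"
  assumes row: "\<forall>i<N. (\<Sum>j<N. W i j) = 1" and col: "\<forall>j<N. (\<Sum>i<N. W i j) = 1"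
    and \<rho>: "spec_norm N (\<lambda>i j. W i j - 1 / real N) = \<rho>" "0 < \<rho>" "\<rho> < 1"
  shows "consensus_error N (\<lambda>i. gossip W N v i + u i)
    \<le> consensus_rate \<rho> * consensus_error N v + consensus_gain \<rho> * consensus_error N u"
proof -
  define e where "e = (1 - \<rho>\<^sup>2) / (2 * \<rho>\<^sup>2)"
  have \<rho>2: "0 < \<rho>\<^sup>2" "\<rho>\<^sup>2 < 1" using \<rho> by (auto simp: power_less_one_iff)
  then have e: "e > 0" "(1 + e) * \<rho>\<^sup>2 = consensus_rate \<rho>" "1 + 1 / e = consensus_gain \<rho>"
    unfolding e_def consensus_rate_def consensus_gain_def by (auto simp: field_simps)
  have "consensus_error N (\<lambda>i. gossip W N v i + u i)
      \<le> (1 + e) * consensus_error N (gossip W N v) + (1 + 1 / e) * consensus_error N u"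
    by (rule consensus_error_add_le[OF e(1)])
  also have "\<dots> \<le> (1 + e) * (\<rho>\<^sup>2 * consensus_error N v) + (1 + 1 / e) * consensus_error N u"
    using consensus_error_gossip_le[OF row col, of v] e(1) \<rho>(1) by (intro add_mono mult_left_mono) auto
  finally show ?thesis unfolding e(2,3)[symmetric] by (simp add: mult.assoc)
qed

section \<open>DOGD-GT\<close>

definition x_iter :: "(nat \<Rightarrow> nat \<Rightarrow> 'a \<Rightarrow> 'a::real_vector) \<Rightarrow> (nat \<Rightarrow> nat \<Rightarrow> real) \<Rightarrow> nat \<Rightarrow> real
    \<Rightarrow> nat \<Rightarrow> nat \<Rightarrow> 'a" where
  "x_iter G W N \<eta> k = fst (dogd G W N \<eta> k)"

definition s_iter :: "(nat \<Rightarrow> nat \<Rightarrow> 'a \<Rightarrow> 'a::real_vector) \<Rightarrow> (nat \<Rightarrow> nat \<Rightarrow> real) \<Rightarrow> nat \<Rightarrow> real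
    \<Rightarrow> nat \<Rightarrow> nat \<Rightarrow> 'a" where
  "s_iter G W N \<eta> k = snd (dogd G W N \<eta> k)"

lemma x_iter_0: "x_iter G W N \<eta> 0 = (\<lambda>i. 0)"
  unfolding x_iter_def by simp

lemma s_iter_0: "s_iter G W N \<eta> 0 = (\<lambda>i. G 1 i 0)"
  unfolding s_iter_def by simp

lemma x_iter_Suc:
  "x_iter G W N \<eta> (Suc k) = (\<lambda>i. gossip W N (x_iter G W N \<eta> k) i - \<eta> *\<^sub>R s_iter G W N \<eta> k i)"
  unfolding x_iter_def s_iter_def gossip_def by (simp add: Let_def)

lemma s_iter_Suc:
  "s_iter G W N \<eta> (Suc k) = (\<lambda>i. gossip W N (s_iter G W N \<eta> k) i
     + G (k + 2) i (x_iter G W N \<eta> (Suc k) i) - G (k + 1) i (x_iter G W N \<eta> k i))"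
  unfolding x_iter_def s_iter_def gossip_def by (simp add: Let_def)

lemma dogd_iter_cong:
  assumes "\<And>s i x. 1 \<le> s \<Longrightarrow> s \<le> k + 1 \<Longrightarrow> i < N \<Longrightarrow> G s i x = G' s i x" and "i < N"
  shows "x_iter G W N \<eta> k i = x_iter G' W N \<eta> k i \<and> s_iter G W N \<eta> k i = s_iter G' W N \<eta> k i"
  using assms
proof (induction k arbitrary: i)
  case 0
  then show ?case by (simp add: x_iter_0 s_iter_0)
next
  case (Suc k)
  have IH: "x_iter G W N \<eta> k j = x_iter G' W N \<eta> k j" "s_iter G W N \<eta> k j = s_iter G' W N \<eta> k j"
    if "j < N" for j
    using Suc.IH[OF _ that] Suc.prems(1) by auto
  then have "gossip W N (x_iter G W N \<eta> k) = gossip W N (x_iter G' W N \<eta> k)"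
    "gossip W N (s_iter G W N \<eta> k) = gossip W N (s_iter G' W N \<eta> k)"
    unfolding gossip_def by auto
  then show ?case
    using IH[OF Suc.prems(2)] Suc.prems(1)[of "k + 2" i] Suc.prems(1)[of "k + 1" i] Suc.prems(2)
    by (simp add: x_iter_Suc s_iter_Suc)
qed

lemma x_iter_cong:
  assumes "\<And>s i x. 1 \<le> s \<Longrightarrow> s \<le> k \<Longrightarrow> i < N \<Longrightarrow> G s i x = G' s i x" and "i < N"
  shows "x_iter G W N \<eta> k i = x_iter G' W N \<eta> k i"
proof (cases k)
  case (Suc k')
  have "x_iter G W N \<eta> k' j = x_iter G' W N \<eta> k' j \<and> s_iter G W N \<eta> k' j = s_iter G' W N \<eta> k' j"
    if "j < N" for j
    using assms(1) Suc that by (intro dogd_iter_cong) auto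
  then show ?thesis unfolding Suc x_iter_Suc gossip_def using assms(2) by simp
qed (simp add: x_iter_0)

lemma avg_s_iter:
  assumes "\<forall>j<N. (\<Sum>i<N. W i j) = 1"
  shows "avg N (s_iter G W N \<eta> k) = avg N (\<lambda>i. G (k + 1) i (x_iter G W N \<eta> k i))"
proof (induction k)
  case 0
  then show ?case by (simp add: s_iter_0 x_iter_0)
next
  case (Suc k)
  then show ?case
    unfolding s_iter_Suc by (simp add: avg_add avg_diff avg_gossip[OF assms])
qed

lemma avg_x_iter_Suc:
  assumes "\<forall>j<N. (\<Sum>i<N. W i j) = 1"
  shows "avg N (x_iter G W N \<eta> (Suc k)) = avg N (x_iter G W N \<eta> k) - \<eta> *\<^sub>R avg N (s_iter G W N \<eta> k)"
  unfolding x_iter_Suc by (simp add: avg_diff avg_scaleR avg_gossip[OF assms])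

context
  fixes G :: "nat \<Rightarrow> nat \<Rightarrow> 'a \<Rightarrow> 'a::euclidean_space" and W :: "nat \<Rightarrow> nat \<Rightarrow> real"
    and N :: nat and \<eta> \<rho> :: real
  assumes row: "\<forall>i<N. (\<Sum>j<N. W i j) = 1" and col: "\<forall>j<N. (\<Sum>i<N. W i j) = 1"
    and \<rho>: "spec_norm N (\<lambda>i j. W i j - 1 / real N) = \<rho>" "0 < \<rho>" "\<rho> < 1"
begin

lemma consensus_error_x_iter_Suc:
  "consensus_error N (x_iter G W N \<eta> (Suc k))
    \<le> consensus_rate \<rho> * consensus_error N (x_iter G W N \<eta> k)
      + consensus_gain \<rho> * \<eta>\<^sup>2 * consensus_error N (s_iter G W N \<eta> k)"
  using consensus_error_gossip_add_le[OF row col \<rho>, of "x_iter G W N \<eta> k" "\<lambda>i. (- \<eta>) *\<^sub>R s_iter G W N \<eta> k i"]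
  unfolding x_iter_Suc consensus_error_scaleR by (simp add: mult.assoc)

lemma consensus_error_s_iter_Suc:
  "consensus_error N (s_iter G W N \<eta> (Suc k))
    \<le> consensus_rate \<rho> * consensus_error N (s_iter G W N \<eta> k)
      + consensus_gain \<rho> * (2 * (\<Sum>i<N. (norm (G (k + 2) i (x_iter G W N \<eta> (Suc k) i)))\<^sup>2)
                         + 2 * (\<Sum>i<N. (norm (G (k + 1) i (x_iter G W N \<eta> k i)))\<^sup>2))"
proof -
  define a where "a i = G (k + 2) i (x_iter G W N \<eta> (Suc k) i)" for i
  define b where "b i = G (k + 1) i (x_iter G W N \<eta> k i)" for i
  have "consensus_error N (s_iter G W N \<eta> (Suc k))
      = consensus_error N (\<lambda>i. gossip W N (s_iter G W N \<eta> k) i + (a i - b i))"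
    unfolding s_iter_Suc a_def b_def by (simp add: algebra_simps)
  also have "\<dots> \<le> consensus_rate \<rho> * consensus_error N (s_iter G W N \<eta> k)
      + consensus_gain \<rho> * consensus_error N (\<lambda>i. a i - b i)"
    by (rule consensus_error_gossip_add_le[OF row col \<rho>])
  also have "\<dots> \<le> consensus_rate \<rho> * consensus_error N (s_iter G W N \<eta> k)
      + consensus_gain \<rho> * (2 * (\<Sum>i<N. (norm (a i))\<^sup>2) + 2 * (\<Sum>i<N. (norm (b i))\<^sup>2))"
    using consensus_constants[OF \<rho>(2,3)] consensus_error_diff_le[of N a b]
    by (intro add_left_mono mult_left_mono) auto
  finally show ?thesis unfolding a_def b_def .
qed

end

locale dogd_run = stochastic_convex_problem P loss g gradF xs L D \<sigma>
  for P :: "'b measure" and loss and g :: "'b \<Rightarrow> 'a::euclidean_space \<Rightarrow> 'a" and gradF xs L D \<sigma> +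
  fixes N T :: nat and W :: "nat \<Rightarrow> nat \<Rightarrow> real" and \<eta> \<rho> :: real
  assumes N_pos: "N \<ge> 1" and T_pos: "T \<ge> 1"
    and row: "\<forall>i<N. (\<Sum>j<N. W i j) = 1" and col: "\<forall>j<N. (\<Sum>i<N. W i j) = 1"
    and spec: "spec_norm N (\<lambda>i j. W i j - 1 / real N) = \<rho>" and \<rho>: "0 < \<rho>" "\<rho> < 1"
    and \<eta>_pos: "0 < \<eta>" and \<eta>_small: "8 * \<eta> * L \<le> 1"
begin

text \<open>A sample path \<open>y\<close> assigns the datum \<open>y (t, i)\<close> to agent \<open>i\<close> at time \<open>t\<close>; under
  \<open>paths\<close> the data are independent with law \<open>P\<close>. Iterations are counted from \<open>0\<close>:
  \<open>X y k\<close> is the iterate \<open>x\<^sub>k\<^sub>+\<^sub>1\<close> of the informal statement and depends only on the data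
  of times \<open>\<le> k\<close>.\<close>

definition coords :: "(nat \<times> nat) set" where
  "coords = {1..T} \<times> {..<N}"

abbreviation paths :: "(nat \<times> nat \<Rightarrow> 'b) measure" where
  "paths \<equiv> PiM coords (\<lambda>_. P)"

definition X :: "(nat \<times> nat \<Rightarrow> 'b) \<Rightarrow> nat \<Rightarrow> nat \<Rightarrow> 'a" where
  "X y = x_iter (\<lambda>t i x. g (y (t, i)) x) W N \<eta>"

definition S :: "(nat \<times> nat \<Rightarrow> 'b) \<Rightarrow> nat \<Rightarrow> nat \<Rightarrow> 'a" where
  "S y = s_iter (\<lambda>t i x. g (y (t, i)) x) W N \<eta>"

lemma finite_coords: "finite coords"
  unfolding coords_def by simp

lemma mem_coords: "(t, i) \<in> coords \<longleftrightarrow> 1 \<le> t \<and> t \<le> T \<and> i < N"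
  unfolding coords_def by auto

sublocale paths: prob_space paths
  by (rule prob_space_PiM) (rule P)

lemma X_fun_upd: "k < t \<Longrightarrow> i < N \<Longrightarrow> X (y((t, j) := z)) k i = X y k i"
  unfolding X_def by (rule x_iter_cong) auto

lemma integrable_coord:
  fixes f :: "'b \<Rightarrow> real"
  shows "(t, i) \<in> coords \<Longrightarrow> integrable P f \<Longrightarrow> integrable paths (\<lambda>y. f (y (t, i)))"
  using integrable_PiM_component_iff[OF P, of "(t, i)" coords f] by auto

lemma square_integrable_coord:
  assumes "(t, i) \<in> coords" "square_integrable P f"
  shows "square_integrable paths (\<lambda>y. f (y (t, i)))"
proof -
  have "(\<lambda>y. y (t, i)) \<in> measurable paths P"
    using assms(1) by (rule measurable_component_singleton)
  then show ?thesis
    using assms measurable_compose[of _ paths P f borel] integrable_coord[of t i "\<lambda>z. (norm (f z))\<^sup>2"]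
    unfolding square_integrable_def by blast
qed

lemma square_integrable_g_at:
  assumes "(t, i) \<in> coords" "square_integrable paths Y"
  shows "square_integrable paths (\<lambda>y. g (y (t, i)) (Y y))"
proof (rule square_integrable_norm_le)
  show "(\<lambda>y. g (y (t, i)) (Y y)) \<in> borel_measurable paths"
    using assms by (intro borel_measurable_caratheodory[OF continuous_on_g g_meas])
      (auto simp: square_integrable_def)
  show "square_integrable paths (\<lambda>y. norm (g (y (t, i)) 0) + L * norm (Y y))"
    using assms square_integrable_coord[OF assms(1) square_integrable_g, of 0]
    by (intro paths.square_integrable_add paths.square_integrable_mult
        square_integrable_norm) auto
  show "norm (g (y (t, i)) (Y y)) \<le> norm (norm (g (y (t, i)) 0) + L * norm (Y y))" for y
    using norm_g_le[of "y (t, i)" "Y y"] L_pos by simp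
qed

lemma square_integrable_gradF:
  assumes "square_integrable paths Y"
  shows "square_integrable paths (\<lambda>y. gradF (Y y))"
proof (rule square_integrable_norm_le)
  show "(\<lambda>y. gradF (Y y)) \<in> borel_measurable paths"
    using assms continuous_on_gradF unfolding square_integrable_def
    by (simp add: measurable_compose[OF _ borel_measurable_continuous_onI])
  show "square_integrable paths (\<lambda>y. norm (gradF 0) + L * norm (Y y))"
    using assms by (intro paths.square_integrable_add paths.square_integrable_const
        paths.square_integrable_mult square_integrable_norm)
  show "norm (gradF (Y y)) \<le> norm (norm (gradF 0) + L * norm (Y y))" for y
    using norm_gradF_le[of "Y y"] L_pos by simp
qed

lemma integrable_loss_at:
  assumes "(t, i) \<in> coords" "square_integrable paths Y"
  shows "integrable paths (\<lambda>y. loss (y (t, i)) (Y y))"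
proof (rule Bochner_Integration.integrable_bound)
  show "integrable paths (\<lambda>y. \<bar>loss (y (t, i)) 0\<bar> + (norm (g (y (t, i)) 0))\<^sup>2 + (1 + L) * (norm (Y y))\<^sup>2)"
    using assms loss_int D_int by (auto intro!: integrable_coord simp: square_integrable_def)
  show "(\<lambda>y. loss (y (t, i)) (Y y)) \<in> borel_measurable paths"
    using assms by (intro borel_measurable_caratheodory[OF continuous_on_loss borel_measurable_loss])
      (auto simp: square_integrable_def)
  show "AE y in paths. norm (loss (y (t, i)) (Y y))
      \<le> norm (\<bar>loss (y (t, i)) 0\<bar> + (norm (g (y (t, i)) 0))\<^sup>2 + (1 + L) * (norm (Y y))\<^sup>2)"
    using abs_loss_le L_pos by (intro AE_I2) (simp add: order_trans[OF _ abs_ge_self])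
qed

lemma integrable_F:
  assumes "square_integrable paths Y"
  shows "integrable paths (\<lambda>y. F (Y y))"
proof (rule Bochner_Integration.integrable_bound)
  show "integrable paths (\<lambda>y. \<bar>F 0\<bar> + (norm (gradF 0))\<^sup>2 + (1 + L) * (norm (Y y))\<^sup>2)"
    using assms by (simp add: square_integrable_def)
  show "(\<lambda>y. F (Y y)) \<in> borel_measurable paths"
    using assms continuous_on_F unfolding square_integrable_def
    by (simp add: measurable_compose[OF _ borel_measurable_continuous_onI])
  show "AE y in paths. norm (F (Y y)) \<le> norm (\<bar>F 0\<bar> + (norm (gradF 0))\<^sup>2 + (1 + L) * (norm (Y y))\<^sup>2)"
    using abs_F_le L_pos by (intro AE_I2) (simp add: order_trans[OF _ abs_ge_self])
qed

lemma square_integrable_iterates: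
  "(k \<le> T \<longrightarrow> (\<forall>i<N. square_integrable paths (\<lambda>y. X y k i)))
   \<and> (k < T \<longrightarrow> (\<forall>i<N. square_integrable paths (\<lambda>y. S y k i)))"
proof (induction k)
  case 0
  show ?case
    using T_pos unfolding X_def S_def x_iter_0 s_iter_0
    by (auto intro!: paths.square_integrable_const square_integrable_g_at[of 1, simplified] simp: mem_coords)
next
  case (Suc k)
  have X: "square_integrable paths (\<lambda>y. X y (Suc k) i)" if "Suc k \<le> T" "i < N" for i
    using Suc.IH that unfolding X_def S_def x_iter_Suc gossip_def
    by (auto intro!: paths.square_integrable_diff paths.square_integrable_sum paths.square_integrable_scaleR)
  moreover have "square_integrable paths (\<lambda>y. S y (Suc k) i)" if "Suc k < T" "i < N" for i
    using Suc.IH that X[of i] unfolding S_def s_iter_Suc gossip_def X_def[symmetric]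
    by (auto intro!: paths.square_integrable_diff paths.square_integrable_add paths.square_integrable_sum
        paths.square_integrable_scaleR square_integrable_g_at simp: mem_coords)
  ultimately show ?case by auto
qed

lemma square_integrable_X: "k \<le> T \<Longrightarrow> i < N \<Longrightarrow> square_integrable paths (\<lambda>y. X y k i)"
  using square_integrable_iterates by auto

lemma square_integrable_S: "k < T \<Longrightarrow> i < N \<Longrightarrow> square_integrable paths (\<lambda>y. S y k i)"
  using square_integrable_iterates by auto

lemma square_integrable_avg:
  fixes v :: "_ \<Rightarrow> nat \<Rightarrow> 'c::euclidean_space"
  assumes "\<And>i. i < N \<Longrightarrow> square_integrable paths (\<lambda>y. v y i)"
  shows "square_integrable paths (\<lambda>y. avg N (v y))"
  unfolding avg_def using assms by (intro paths.square_integrable_scaleR paths.square_integrable_sum) auto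

lemma integrable_sum_norm_sq:
  fixes v :: "_ \<Rightarrow> nat \<Rightarrow> 'c::euclidean_space"
  assumes "\<And>i. i < N \<Longrightarrow> square_integrable paths (\<lambda>y. v y i)"
  shows "integrable paths (\<lambda>y. \<Sum>i<N. (norm (v y i))\<^sup>2)"
  using assms by (intro Bochner_Integration.integrable_sum integrable_norm_sq) auto

lemma integrable_consensus_error:
  fixes v :: "_ \<Rightarrow> nat \<Rightarrow> 'c::euclidean_space"
  assumes "\<And>i. i < N \<Longrightarrow> square_integrable paths (\<lambda>y. v y i)"
  shows "integrable paths (\<lambda>y. consensus_error N (v y))"
  unfolding consensus_error_def using assms
  by (intro integrable_sum_norm_sq paths.square_integrable_diff square_integrable_avg) auto

end

context dogd_run
begin

definition stoch_grad :: "(nat \<times> nat \<Rightarrow> 'b) \<Rightarrow> nat \<Rightarrow> nat \<Rightarrow> 'a" where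
  "stoch_grad y k i = g (y (k + 1, i)) (X y k i)"

definition noise :: "(nat \<times> nat \<Rightarrow> 'b) \<Rightarrow> nat \<Rightarrow> nat \<Rightarrow> 'a" where
  "noise y k i = stoch_grad y k i - gradF (X y k i)"

lemma square_integrable_stoch_grad: "k < T \<Longrightarrow> i < N \<Longrightarrow> square_integrable paths (\<lambda>y. stoch_grad y k i)"
  unfolding stoch_grad_def by (intro square_integrable_g_at square_integrable_X) (auto simp: mem_coords)

lemma square_integrable_gradF_X: "k \<le> T \<Longrightarrow> i < N \<Longrightarrow> square_integrable paths (\<lambda>y. gradF (X y k i))"
  by (intro square_integrable_gradF square_integrable_X)

lemma square_integrable_noise: "k < T \<Longrightarrow> i < N \<Longrightarrow> square_integrable paths (\<lambda>y. noise y k i)"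
  unfolding noise_def by (intro paths.square_integrable_diff square_integrable_stoch_grad square_integrable_gradF_X) auto

lemma integral_loss_X:
  assumes "k < T" "i < N"
  shows "(\<integral>y. loss (y (k + 1, i)) (X y k i) \<partial>paths) = (\<integral>y. F (X y k i) \<partial>paths)"
  using assms
  by (intro integral_PiM_fresh_coordinate_eq[OF P finite_coords, where h=loss and H=F])
    (auto simp: mem_coords X_fun_upd intro!: integrable_loss_at integrable_F square_integrable_X F_def[symmetric])

lemma integral_loss_xs: "(t, i) \<in> coords \<Longrightarrow> (\<integral>y. loss (y (t, i)) xs \<partial>paths) = F xs"
  unfolding F_def by (rule integral_PiM_component[OF P]) (auto intro: borel_measurable_loss)

lemma integral_norm_stoch_grad_sq_le: "k < T \<Longrightarrow> i < N \<Longrightarrow> (\<integral>y. (norm (stoch_grad y k i))\<^sup>2 \<partial>paths) \<le> D"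
  unfolding stoch_grad_def
  by (rule integral_PiM_fresh_coordinate_le[OF P finite_coords, where h="\<lambda>z x. (norm (g z x))\<^sup>2"])
    (auto simp: mem_coords X_fun_upd D_nonneg intro!: D_bound integrable_norm_sq square_integrable_g_at
      square_integrable_X)

lemma integral_norm_noise_sq_le: "k < T \<Longrightarrow> i < N \<Longrightarrow> (\<integral>y. (norm (noise y k i))\<^sup>2 \<partial>paths) \<le> \<sigma>\<^sup>2"
  unfolding noise_def stoch_grad_def
  by (rule integral_PiM_fresh_coordinate_le[OF P finite_coords, where h="\<lambda>z x. (norm (g z x - gradF x))\<^sup>2"])
    (auto simp: mem_coords X_fun_upd intro!: var_bound integrable_norm_sq paths.square_integrable_diff
      square_integrable_g_at square_integrable_X square_integrable_gradF)

text \<open>The stochastic gradient of agent \<open>i\<close> at step \<open>k\<close> is unbiased given everything that does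
  not involve its own fresh sample \<open>(k + 1, i)\<close>.\<close>

lemma integral_stoch_grad_inner:
  assumes k: "k < T" and i: "i < N" and V: "square_integrable paths V"
    and V_indep: "\<And>y z. V (y((k + 1, i) := z)) = V y"
  shows "(\<integral>y. stoch_grad y k i \<bullet> V y \<partial>paths) = (\<integral>y. gradF (X y k i) \<bullet> V y \<partial>paths)"
proof -
  have "(\<integral>y. (\<lambda>z p. g z (fst p) \<bullet> snd p) (y (k + 1, i)) (X y k i, V y) \<partial>paths)
      = (\<integral>y. (\<lambda>p. gradF (fst p) \<bullet> snd p) (X y k i, V y) \<partial>paths)"
  proof (rule integral_PiM_fresh_coordinate_eq[OF P finite_coords])
    show "(k + 1, i) \<in> coords" using k i by (simp add: mem_coords)
    show "(X (y((k + 1, i) := z)) k i, V (y((k + 1, i) := z))) = (X y k i, V y)" for y z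
      using i V_indep by (simp add: X_fun_upd)
    show "(\<integral>z. g z (fst p) \<bullet> snd p \<partial>P) = gradF (fst p) \<bullet> snd p" for p
      using integrable_g by (simp add: integral_g_eq_gradF)
    show "integrable paths (\<lambda>y. g (y (k + 1, i)) (fst (X y k i, V y)) \<bullet> snd (X y k i, V y))"
      using square_integrable_stoch_grad[OF k i] V unfolding stoch_grad_def by (simp add: paths.integrable_inner)
    show "integrable paths (\<lambda>y. gradF (fst (X y k i, V y)) \<bullet> snd (X y k i, V y))"
      using square_integrable_gradF_X[of k i] k i V by (simp add: paths.integrable_inner)
  qed
  then show ?thesis unfolding stoch_grad_def by simp
qed

lemma integral_noise_inner_eq_0:
  assumes k: "k < T" and i: "i < N" and V: "square_integrable paths V"
    and V_indep: "\<And>y z. V (y((k + 1, i) := z)) = V y"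
  shows "(\<integral>y. noise y k i \<bullet> V y \<partial>paths) = 0"
proof -
  have "(\<integral>y. noise y k i \<bullet> V y \<partial>paths) = (\<integral>y. stoch_grad y k i \<bullet> V y \<partial>paths) - (\<integral>y. gradF (X y k i) \<bullet> V y \<partial>paths)"
    unfolding noise_def inner_diff_left using square_integrable_stoch_grad square_integrable_gradF_X k i V
    by (intro Bochner_Integration.integral_diff paths.integrable_inner) auto
  then show ?thesis using integral_stoch_grad_inner[OF assms] by simp
qed

lemma integral_noise_inner_noise:
  assumes "k < T" "i < N" "j < N" "i \<noteq> j"
  shows "(\<integral>y. noise y k i \<bullet> noise y k j \<partial>paths) = 0"
proof (rule integral_noise_inner_eq_0[OF assms(1,2) square_integrable_noise[OF assms(1,3)]])
  show "noise (y((k + 1, i) := z)) k j = noise y k j" for y z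
    unfolding noise_def stoch_grad_def using assms(3,4) by (simp add: X_fun_upd)
qed

text \<open>Noise of different agents is uncorrelated, which is where the factor \<open>1 / N\<close> comes from.\<close>

lemma integral_norm_avg_noise_sq_le:
  assumes k: "k < T"
  shows "(\<integral>y. (norm (avg N (noise y k)))\<^sup>2 \<partial>paths) \<le> \<sigma>\<^sup>2 / real N"
proof -
  have integrable: "integrable paths (\<lambda>y. noise y k i \<bullet> noise y k j)" if "i < N" "j < N" for i j
    using that k by (intro paths.integrable_inner square_integrable_noise)
  have pointwise: "(norm (avg N (noise y k)))\<^sup>2 = (1 / real N)\<^sup>2 * (\<Sum>i<N. \<Sum>j<N. noise y k i \<bullet> noise y k j)" for y
  proof -
    have "(\<Sum>i<N. noise y k i) \<bullet> (\<Sum>j<N. noise y k j) = (\<Sum>i<N. \<Sum>j<N. noise y k i \<bullet> noise y k j)"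
      by (simp add: inner_sum_left inner_sum_right) (rule sum.swap)
    then show ?thesis unfolding avg_def power2_norm_eq_inner by (simp add: power2_eq_square)
  qed
  have "(\<integral>y. (norm (avg N (noise y k)))\<^sup>2 \<partial>paths)
      = (1 / real N)\<^sup>2 * (\<Sum>i<N. \<Sum>j<N. (\<integral>y. noise y k i \<bullet> noise y k j \<partial>paths))"
    unfolding pointwise
    using integral_double_sum[of "{..<N}" "{..<N}" paths "\<lambda>i j y. noise y k i \<bullet> noise y k j"] integrable
    by simp
  also have "\<dots> = (1 / real N)\<^sup>2 * (\<Sum>i<N. (\<integral>y. (norm (noise y k i))\<^sup>2 \<partial>paths))"
  proof -
    have "(\<Sum>j<N. (\<integral>y. noise y k i \<bullet> noise y k j \<partial>paths)) = (\<integral>y. (norm (noise y k i))\<^sup>2 \<partial>paths)"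
      if "i < N" for i
    proof -
      have "(\<Sum>j<N. (\<integral>y. noise y k i \<bullet> noise y k j \<partial>paths))
          = (\<Sum>j<N. if j = i then (\<integral>y. (norm (noise y k i))\<^sup>2 \<partial>paths) else 0)"
        using integral_noise_inner_noise[OF k that] by (intro sum.cong) (auto simp: power2_norm_eq_inner)
      then show ?thesis using that by simp
    qed
    then show ?thesis by simp
  qed
  also have "\<dots> \<le> (1 / real N)\<^sup>2 * (\<Sum>i<N. \<sigma>\<^sup>2)"
    using integral_norm_noise_sq_le[OF k] by (intro mult_left_mono sum_mono) auto
  also have "\<dots> = \<sigma>\<^sup>2 / real N" using N_pos by (simp add: power2_eq_square)
  finally show ?thesis .
qed

end

lemma linear_recurrence_le:
  fixes a :: "nat \<Rightarrow> real"
  assumes "a 0 \<le> B" "\<And>k. Suc k < n \<Longrightarrow> a (Suc k) \<le> q * a k + r" "0 \<le> q" "q * B + r \<le> B"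
  shows "k < n \<Longrightarrow> a k \<le> B"
proof (induction k)
  case (Suc k)
  then have "a (Suc k) \<le> q * a k + r" using assms(2) by simp
  also have "\<dots> \<le> q * B + r" using Suc assms(3) by (simp add: mult_left_mono)
  finally show ?case using assms(4) by simp
qed (use assms(1) in simp)

context dogd_run
begin

definition sum_sq_stoch_grad :: "(nat \<times> nat \<Rightarrow> 'b) \<Rightarrow> nat \<Rightarrow> real" where
  "sum_sq_stoch_grad y k = (\<Sum>i<N. (norm (stoch_grad y k i))\<^sup>2)"

definition tracking_bound :: real where
  "tracking_bound = real N * D * (1 + 4 * consensus_gain \<rho> / (1 - consensus_rate \<rho>))"

definition consensus_bound :: real where
  "consensus_bound = consensus_gain \<rho> * \<eta>\<^sup>2 * tracking_bound / (1 - consensus_rate \<rho>)"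

lemma tracking_bound_ge: "real N * D \<le> tracking_bound"
proof -
  have "1 \<le> 1 + 4 * consensus_gain \<rho> / (1 - consensus_rate \<rho>)"
    using consensus_constants[OF \<rho>] by simp
  from mult_left_mono[OF this, of "real N * D"] show ?thesis
    unfolding tracking_bound_def using D_nonneg by simp
qed

lemma consensus_error_X_0: "consensus_error N (X y 0) = 0"
  unfolding X_def x_iter_0 consensus_error_def avg_def by simp

lemma consensus_error_S_0: "consensus_error N (S y 0) \<le> sum_sq_stoch_grad y 0"
  using consensus_error_le_sum_sq[of N "S y 0"]
  unfolding sum_sq_stoch_grad_def stoch_grad_def S_def X_def s_iter_0 x_iter_0 by simp

lemma consensus_error_X_Suc:
  "consensus_error N (X y (Suc k))
    \<le> consensus_rate \<rho> * consensus_error N (X y k) + consensus_gain \<rho> * \<eta>\<^sup>2 * consensus_error N (S y k)"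
  unfolding X_def S_def by (rule consensus_error_x_iter_Suc[OF row col spec \<rho>])

lemma consensus_error_S_Suc:
  "consensus_error N (S y (Suc k))
    \<le> consensus_rate \<rho> * consensus_error N (S y k) + consensus_gain \<rho> * (2 * sum_sq_stoch_grad y (Suc k) + 2 * sum_sq_stoch_grad y k)"
  using consensus_error_s_iter_Suc[OF row col spec \<rho>, of "\<lambda>t i x. g (y (t, i)) x" \<eta> k]
  unfolding sum_sq_stoch_grad_def stoch_grad_def S_def X_def by simp

lemma integrable_sum_sq_stoch_grad: "k < T \<Longrightarrow> integrable paths (\<lambda>y. sum_sq_stoch_grad y k)"
  unfolding sum_sq_stoch_grad_def by (intro integrable_sum_norm_sq square_integrable_stoch_grad)

lemma integral_sum_sq_stoch_grad_le: "k < T \<Longrightarrow> (\<integral>y. sum_sq_stoch_grad y k \<partial>paths) \<le> real N * D"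
proof -
  assume k: "k < T"
  have "(\<integral>y. sum_sq_stoch_grad y k \<partial>paths) = (\<Sum>i<N. (\<integral>y. (norm (stoch_grad y k i))\<^sup>2 \<partial>paths))"
    unfolding sum_sq_stoch_grad_def using k
    by (intro Bochner_Integration.integral_sum integrable_norm_sq square_integrable_stoch_grad) auto
  also have "\<dots> \<le> (\<Sum>i<N. D)" using integral_norm_stoch_grad_sq_le k by (intro sum_mono) auto
  finally show ?thesis by simp
qed

lemma integrable_consensus_error_S: "k < T \<Longrightarrow> integrable paths (\<lambda>y. consensus_error N (S y k))"
  by (intro integrable_consensus_error square_integrable_S)

lemma integrable_consensus_error_X: "k \<le> T \<Longrightarrow> integrable paths (\<lambda>y. consensus_error N (X y k))"
  by (intro integrable_consensus_error square_integrable_X)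

lemma integral_consensus_error_S_le:
  "k < T \<Longrightarrow> (\<integral>y. consensus_error N (S y k) \<partial>paths) \<le> tracking_bound"
proof (rule linear_recurrence_le[where q="consensus_rate \<rho>" and r="4 * consensus_gain \<rho> * (real N * D)"])
  show "(\<integral>y. consensus_error N (S y 0) \<partial>paths) \<le> tracking_bound"
  proof -
    have "(\<integral>y. consensus_error N (S y 0) \<partial>paths) \<le> (\<integral>y. sum_sq_stoch_grad y 0 \<partial>paths)"
      using T_pos by (intro integral_mono consensus_error_S_0 integrable_consensus_error_S integrable_sum_sq_stoch_grad) auto
    also have "\<dots> \<le> tracking_bound"
      using T_pos integral_sum_sq_stoch_grad_le[of 0] tracking_bound_ge by simp
    finally show ?thesis .
  qed
  fix k assume k: "Suc k < T"
  have "(\<integral>y. consensus_error N (S y (Suc k)) \<partial>paths)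
      \<le> (\<integral>y. consensus_rate \<rho> * consensus_error N (S y k)
              + consensus_gain \<rho> * (2 * sum_sq_stoch_grad y (Suc k) + 2 * sum_sq_stoch_grad y k) \<partial>paths)"
    using k integrable_consensus_error_S[of k] integrable_consensus_error_S[of "Suc k"]
      integrable_sum_sq_stoch_grad[of k] integrable_sum_sq_stoch_grad[of "Suc k"]
    by (intro integral_mono consensus_error_S_Suc) auto
  also have "\<dots> = consensus_rate \<rho> * (\<integral>y. consensus_error N (S y k) \<partial>paths)
      + consensus_gain \<rho> * (2 * (\<integral>y. sum_sq_stoch_grad y (Suc k) \<partial>paths) + 2 * (\<integral>y. sum_sq_stoch_grad y k \<partial>paths))"
    using k integrable_consensus_error_S[of k] integrable_sum_sq_stoch_grad[of k] integrable_sum_sq_stoch_grad[of "Suc k"]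
    by simp
  also have "\<dots> \<le> consensus_rate \<rho> * (\<integral>y. consensus_error N (S y k) \<partial>paths)
      + 4 * consensus_gain \<rho> * (real N * D)"
    using k integral_sum_sq_stoch_grad_le[of k] integral_sum_sq_stoch_grad_le[of "Suc k"] consensus_constants[OF \<rho>] by simp
  finally show "(\<integral>y. consensus_error N (S y (Suc k)) \<partial>paths)
      \<le> consensus_rate \<rho> * (\<integral>y. consensus_error N (S y k) \<partial>paths) + 4 * consensus_gain \<rho> * (real N * D)" .
next
  have "consensus_rate \<rho> * tracking_bound + 4 * consensus_gain \<rho> * (real N * D)
      = tracking_bound - (1 - consensus_rate \<rho>) * (real N * D)"
    using consensus_constants[OF \<rho>] unfolding tracking_bound_def by (simp add: field_simps)
  then show "consensus_rate \<rho> * tracking_bound + 4 * consensus_gain \<rho> * (real N * D) \<le> tracking_bound"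
    using consensus_constants[OF \<rho>] D_nonneg by simp
qed (use consensus_constants[OF \<rho>] in auto)

lemma integral_consensus_error_X_le:
  "k < T \<Longrightarrow> (\<integral>y. consensus_error N (X y k) \<partial>paths) \<le> consensus_bound"
proof (rule linear_recurrence_le[where q="consensus_rate \<rho>" and r="consensus_gain \<rho> * \<eta>\<^sup>2 * tracking_bound"])
  fix k assume k: "Suc k < T"
  have "(\<integral>y. consensus_error N (X y (Suc k)) \<partial>paths)
      \<le> (\<integral>y. consensus_rate \<rho> * consensus_error N (X y k)
              + consensus_gain \<rho> * \<eta>\<^sup>2 * consensus_error N (S y k) \<partial>paths)"
    using k integrable_consensus_error_S[of k] integrable_consensus_error_X[of k]
      integrable_consensus_error_X[of "Suc k"]
    by (intro integral_mono consensus_error_X_Suc) auto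
  also have "\<dots> = consensus_rate \<rho> * (\<integral>y. consensus_error N (X y k) \<partial>paths)
      + consensus_gain \<rho> * \<eta>\<^sup>2 * (\<integral>y. consensus_error N (S y k) \<partial>paths)"
    using k integrable_consensus_error_S[of k] integrable_consensus_error_X[of k] by simp
  also have "\<dots> \<le> consensus_rate \<rho> * (\<integral>y. consensus_error N (X y k) \<partial>paths)
      + consensus_gain \<rho> * \<eta>\<^sup>2 * tracking_bound"
    using k integral_consensus_error_S_le[of k] consensus_constants[OF \<rho>]
    by (simp add: mult_left_mono)
  finally show "(\<integral>y. consensus_error N (X y (Suc k)) \<partial>paths)
      \<le> consensus_rate \<rho> * (\<integral>y. consensus_error N (X y k) \<partial>paths)
        + consensus_gain \<rho> * \<eta>\<^sup>2 * tracking_bound" .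
next
  have "0 \<le> tracking_bound" using tracking_bound_ge D_nonneg by (smt (verit) of_nat_0_le_iff mult_nonneg_nonneg)
  then show "(\<integral>y. consensus_error N (X y 0) \<partial>paths) \<le> consensus_bound"
    unfolding consensus_error_X_0 consensus_bound_def using consensus_constants[OF \<rho>] by simp
next
  have "consensus_rate \<rho> * consensus_bound + consensus_gain \<rho> * \<eta>\<^sup>2 * tracking_bound = consensus_bound"
    unfolding consensus_bound_def using consensus_constants[OF \<rho>] by (simp add: field_simps)
  then show "consensus_rate \<rho> * consensus_bound + consensus_gain \<rho> * \<eta>\<^sup>2 * tracking_bound \<le> consensus_bound"
    by simp
qed (use consensus_constants[OF \<rho>] in simp)

end

context dogd_run
begin

definition xbar :: "(nat \<times> nat \<Rightarrow> 'b) \<Rightarrow> nat \<Rightarrow> 'a" where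
  "xbar y k = avg N (X y k)"

definition dist_sq :: "(nat \<times> nat \<Rightarrow> 'b) \<Rightarrow> nat \<Rightarrow> real" where
  "dist_sq y k = (norm (xbar y k - xs))\<^sup>2"

definition gap :: "(nat \<times> nat \<Rightarrow> 'b) \<Rightarrow> nat \<Rightarrow> real" where
  "gap y k = (\<Sum>i<N. F (X y k i) - F xs)"

lemma gap_nonneg: "0 \<le> gap y k"
  unfolding gap_def using F_min by (intro sum_nonneg) auto

lemma xbar_Suc: "xbar y (Suc k) = xbar y k - \<eta> *\<^sub>R avg N (stoch_grad y k)"
  using avg_x_iter_Suc[OF col, of "\<lambda>t i x. g (y (t, i)) x" \<eta> k] avg_s_iter[OF col, of "\<lambda>t i x. g (y (t, i)) x" \<eta> k]
  unfolding xbar_def X_def S_def stoch_grad_def by simp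

text \<open>Convexity at each \<open>x\<^sub>i\<close>, plus an \<open>L\<close>-Lipschitz correction for taking the gradients at
  \<open>x\<^sub>i\<close> but the direction from the average.\<close>

lemma sum_gradF_inner_ge:
  "gap y k - L * consensus_error N (X y k) \<le> (\<Sum>i<N. gradF (X y k i) \<bullet> (xbar y k - xs))"
proof -
  define m where "m = xbar y k"
  define x where "x i = X y k i" for i
  have sum_x: "(\<Sum>i<N. x i) = real N *\<^sub>R m"
    unfolding m_def xbar_def x_def using N_pos by (simp add: sum_eq_avg)
  have convex: "F (x i) - F xs \<le> gradF (x i) \<bullet> (x i - xs)" for i
    using F_ge_linearization[of "x i" xs] by (simp add: inner_diff_right)
  have lipschitz: "- L * (norm (x i - m))\<^sup>2 \<le> (gradF (x i) - gradF m) \<bullet> (m - x i)" for i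
  proof -
    have "\<bar>(gradF (x i) - gradF m) \<bullet> (m - x i)\<bar> \<le> norm (gradF (x i) - gradF m) * norm (m - x i)"
      by (rule Cauchy_Schwarz_ineq2)
    also have "\<dots> \<le> L * norm (x i - m) * norm (m - x i)"
      by (intro mult_right_mono gradF_lipschitz) auto
    finally show ?thesis by (simp add: norm_minus_commute power2_eq_square)
  qed
  have centered: "(\<Sum>i<N. gradF m \<bullet> (m - x i)) = 0"
    by (simp add: inner_diff_right sum_subtractf inner_sum_right[symmetric] sum_x)
  have "(\<Sum>i<N. gradF (x i) \<bullet> (m - xs)) = (\<Sum>i<N. gradF (x i) \<bullet> (x i - xs))
      + (\<Sum>i<N. (gradF (x i) - gradF m) \<bullet> (m - x i)) + (\<Sum>i<N. gradF m \<bullet> (m - x i))"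
    by (simp add: sum.distrib[symmetric] inner_diff_left inner_diff_right algebra_simps)
  moreover have "(\<Sum>i<N. F (x i) - F xs) \<le> (\<Sum>i<N. gradF (x i) \<bullet> (x i - xs))"
    by (intro sum_mono convex)
  moreover have "(\<Sum>i<N. - L * (norm (x i - m))\<^sup>2) \<le> (\<Sum>i<N. (gradF (x i) - gradF m) \<bullet> (m - x i))"
    by (intro sum_mono lipschitz)
  ultimately have "(\<Sum>i<N. F (x i) - F xs) + (\<Sum>i<N. - L * (norm (x i - m))\<^sup>2) \<le> (\<Sum>i<N. gradF (x i) \<bullet> (m - xs))"
    unfolding centered by linarith
  then show ?thesis
    unfolding gap_def consensus_error_def x_def m_def xbar_def by (simp add: sum_negf sum_distrib_left)
qed

lemma norm_avg_stoch_grad_sq_le: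
  "(norm (avg N (stoch_grad y k)))\<^sup>2 \<le> 2 * (norm (avg N (noise y k)))\<^sup>2 + (8 * L / real N) * gap y k"
proof -
  have "avg N (stoch_grad y k) = avg N (noise y k) + avg N (\<lambda>i. gradF (X y k i))"
    unfolding avg_add[symmetric] noise_def by simp
  then have "(norm (avg N (stoch_grad y k)))\<^sup>2
      \<le> 2 * (norm (avg N (noise y k)))\<^sup>2 + 2 * (norm (avg N (\<lambda>i. gradF (X y k i))))\<^sup>2"
    using norm_add_sq_le by simp
  also have "(norm (avg N (\<lambda>i. gradF (X y k i))))\<^sup>2 \<le> (1 / real N) * (\<Sum>i<N. (norm (gradF (X y k i)))\<^sup>2)"
    by (rule norm_avg_sq_le[OF N_pos])
  also have "(\<Sum>i<N. (norm (gradF (X y k i)))\<^sup>2) \<le> (\<Sum>i<N. 4 * L * (F (X y k i) - F xs))"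
    by (intro sum_mono norm_gradF_sq_le)
  finally show ?thesis
    unfolding gap_def by (simp add: sum_distrib_left[symmetric] divide_right_mono)
qed

lemma dist_sq_Suc_le:
  "dist_sq y (Suc k) \<le> dist_sq y k - (2 * \<eta> / real N) * (\<Sum>i<N. stoch_grad y k i \<bullet> (xbar y k - xs))
     + 2 * \<eta>\<^sup>2 * (norm (avg N (noise y k)))\<^sup>2 + (8 * \<eta>\<^sup>2 * L / real N) * gap y k"
proof -
  define w where "w = xbar y k - xs"
  define a where "a = avg N (stoch_grad y k)"
  have "dist_sq y (Suc k) = (norm w)\<^sup>2 - 2 * \<eta> * (a \<bullet> w) + \<eta>\<^sup>2 * (norm a)\<^sup>2"
    unfolding dist_sq_def xbar_Suc w_def a_def power2_norm_eq_inner
    by (simp add: inner_diff_left inner_diff_right inner_commute power2_eq_square algebra_simps)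
  also have "a \<bullet> w = (1 / real N) * (\<Sum>i<N. stoch_grad y k i \<bullet> w)"
    unfolding a_def avg_def by (simp add: inner_sum_left)
  also have "\<eta>\<^sup>2 * (norm a)\<^sup>2 \<le> \<eta>\<^sup>2 * (2 * (norm (avg N (noise y k)))\<^sup>2 + (8 * L / real N) * gap y k)"
    unfolding a_def by (intro mult_left_mono norm_avg_stoch_grad_sq_le) auto
  finally show ?thesis unfolding dist_sq_def w_def by (simp add: field_simps)
qed

lemma square_integrable_xbar: "k \<le> T \<Longrightarrow> square_integrable paths (\<lambda>y. xbar y k - xs)"
proof -
  assume "k \<le> T"
  then have "square_integrable paths (\<lambda>y. avg N (X y k))"
    by (intro square_integrable_avg square_integrable_X)
  then show ?thesis unfolding xbar_def by (rule paths.square_integrable_diff) (rule paths.square_integrable_const)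
qed

lemma integrable_dist_sq: "k \<le> T \<Longrightarrow> integrable paths (\<lambda>y. dist_sq y k)"
  unfolding dist_sq_def by (intro integrable_norm_sq square_integrable_xbar)

lemma integrable_gap: "k \<le> T \<Longrightarrow> integrable paths (\<lambda>y. gap y k)"
  unfolding gap_def by (intro Bochner_Integration.integrable_sum Bochner_Integration.integrable_diff
      integrable_F square_integrable_X paths.square_integrable_const) auto

lemma integral_gap: "k \<le> T \<Longrightarrow> (\<integral>y. gap y k \<partial>paths) = (\<Sum>i<N. (\<integral>y. F (X y k i) \<partial>paths) - F xs)"
proof -
  assume k: "k \<le> T"
  have F: "integrable paths (\<lambda>y. F (X y k i))" if "i < N" for i
    using k that by (intro integrable_F square_integrable_X)
  then have "(\<integral>y. gap y k \<partial>paths) = (\<Sum>i<N. (\<integral>y. F (X y k i) - F xs \<partial>paths))"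
    unfolding gap_def by (intro Bochner_Integration.integral_sum) auto
  also have "\<dots> = (\<Sum>i<N. (\<integral>y. F (X y k i) \<partial>paths) - F xs)"
    using F by (intro sum.cong refl) (simp add: paths.prob_space)
  finally show ?thesis .
qed

lemma integrable_sum_stoch_grad_inner: "k < T \<Longrightarrow> integrable paths (\<lambda>y. \<Sum>i<N. stoch_grad y k i \<bullet> (xbar y k - xs))"
  by (intro Bochner_Integration.integrable_sum paths.integrable_inner square_integrable_stoch_grad square_integrable_xbar)
    auto

lemma integrable_sum_gradF_inner: "k < T \<Longrightarrow> integrable paths (\<lambda>y. \<Sum>i<N. gradF (X y k i) \<bullet> (xbar y k - xs))"
  by (intro Bochner_Integration.integrable_sum paths.integrable_inner square_integrable_gradF_X square_integrable_xbar)
    auto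

lemma integral_sum_stoch_grad_inner_ge:
  assumes k: "k < T"
  shows "(\<integral>y. gap y k \<partial>paths) - L * consensus_bound \<le> (\<integral>y. (\<Sum>i<N. stoch_grad y k i \<bullet> (xbar y k - xs)) \<partial>paths)"
proof -
  have "(\<integral>y. gap y k \<partial>paths) - L * consensus_bound
      \<le> (\<integral>y. gap y k \<partial>paths) - L * (\<integral>y. consensus_error N (X y k) \<partial>paths)"
    using integral_consensus_error_X_le[OF k] L_pos by simp
  also have "\<dots> = (\<integral>y. gap y k - L * consensus_error N (X y k) \<partial>paths)"
    using k integrable_gap[of k] integrable_consensus_error_X[of k] by simp
  also have "\<dots> \<le> (\<integral>y. (\<Sum>i<N. gradF (X y k i) \<bullet> (xbar y k - xs)) \<partial>paths)"
    using k integrable_gap[of k] integrable_consensus_error_X[of k] integrable_sum_gradF_inner[OF k]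
    by (intro integral_mono sum_gradF_inner_ge) auto
  also have "\<dots> = (\<Sum>i<N. (\<integral>y. gradF (X y k i) \<bullet> (xbar y k - xs) \<partial>paths))"
    using k by (intro Bochner_Integration.integral_sum paths.integrable_inner square_integrable_gradF_X
        square_integrable_xbar) auto
  also have "\<dots> = (\<Sum>i<N. (\<integral>y. stoch_grad y k i \<bullet> (xbar y k - xs) \<partial>paths))"
    using k by (intro sum.cong refl integral_stoch_grad_inner[symmetric] square_integrable_xbar)
      (auto simp: xbar_def X_fun_upd intro!: avg_cong)
  also have "\<dots> = (\<integral>y. (\<Sum>i<N. stoch_grad y k i \<bullet> (xbar y k - xs)) \<partial>paths)"
    using k by (intro Bochner_Integration.integral_sum[symmetric] paths.integrable_inner square_integrable_stoch_grad
        square_integrable_xbar) auto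
  finally show ?thesis .
qed

lemma integral_dist_sq_Suc_le:
  assumes k: "k < T"
  shows "(\<integral>y. dist_sq y (Suc k) \<partial>paths) \<le> (\<integral>y. dist_sq y k \<partial>paths)
     - (2 * \<eta> / real N) * (\<integral>y. (\<Sum>i<N. stoch_grad y k i \<bullet> (xbar y k - xs)) \<partial>paths)
     + 2 * \<eta>\<^sup>2 * (\<integral>y. (norm (avg N (noise y k)))\<^sup>2 \<partial>paths) + (8 * \<eta>\<^sup>2 * L / real N) * (\<integral>y. gap y k \<partial>paths)"
proof -
  have integrable: "integrable paths (\<lambda>y. dist_sq y k)" "integrable paths (\<lambda>y. gap y k)"
    "integrable paths (\<lambda>y. \<Sum>i<N. stoch_grad y k i \<bullet> (xbar y k - xs))"
    "integrable paths (\<lambda>y. (norm (avg N (noise y k)))\<^sup>2)"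
    using k by (auto intro!: integrable_dist_sq integrable_gap integrable_sum_stoch_grad_inner integrable_norm_sq
        square_integrable_avg square_integrable_noise)
  have "(\<integral>y. dist_sq y (Suc k) \<partial>paths) \<le> (\<integral>y. dist_sq y k - (2 * \<eta> / real N) * (\<Sum>i<N. stoch_grad y k i \<bullet> (xbar y k - xs))
     + 2 * \<eta>\<^sup>2 * (norm (avg N (noise y k)))\<^sup>2 + (8 * \<eta>\<^sup>2 * L / real N) * gap y k \<partial>paths)"
    using k integrable by (intro integral_mono dist_sq_Suc_le integrable_dist_sq) auto
  then show ?thesis using integrable by simp
qed

lemma descent_step:
  assumes k: "k < T"
  shows "(\<integral>y. dist_sq y (Suc k) \<partial>paths) + (\<eta> / real N) * (\<integral>y. gap y k \<partial>paths)
     \<le> (\<integral>y. dist_sq y k \<partial>paths) + (2 * \<eta> * L / real N) * consensus_bound + 2 * \<eta>\<^sup>2 * \<sigma>\<^sup>2 / real N"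
proof -
  define EG where "EG = (\<integral>y. gap y k \<partial>paths)"
  have N: "0 < real N" using N_pos by simp
  have "(2 * \<eta> / real N) * (EG - L * consensus_bound)
      \<le> (2 * \<eta> / real N) * (\<integral>y. (\<Sum>i<N. stoch_grad y k i \<bullet> (xbar y k - xs)) \<partial>paths)"
    using integral_sum_stoch_grad_inner_ge[OF k] \<eta>_pos N unfolding EG_def by (intro mult_left_mono) auto
  moreover have "2 * \<eta>\<^sup>2 * (\<integral>y. (norm (avg N (noise y k)))\<^sup>2 \<partial>paths) \<le> 2 * \<eta>\<^sup>2 * (\<sigma>\<^sup>2 / real N)"
    using integral_norm_avg_noise_sq_le[OF k] by (intro mult_left_mono) auto
  moreover have "(8 * \<eta>\<^sup>2 * L / real N) * EG \<le> (\<eta> / real N) * EG"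
  proof -
    have "8 * \<eta>\<^sup>2 * L = \<eta> * (8 * \<eta> * L)" by (simp add: power2_eq_square)
    also have "\<dots> \<le> \<eta>" using \<eta>_small \<eta>_pos by (simp add: mult_left_le)
    finally show ?thesis
      unfolding EG_def using N by (intro mult_right_mono divide_right_mono integral_nonneg_AE) (auto simp: gap_nonneg)
  qed
  moreover have "(2 * \<eta> / real N) * (EG - L * consensus_bound)
      = 2 * ((\<eta> / real N) * EG) - (2 * \<eta> * L / real N) * consensus_bound"
    by (simp add: algebra_simps)
  moreover have "2 * \<eta>\<^sup>2 * (\<sigma>\<^sup>2 / real N) = 2 * \<eta>\<^sup>2 * \<sigma>\<^sup>2 / real N" by simp
  ultimately show ?thesis
    using integral_dist_sq_Suc_le[OF k] unfolding EG_def[symmetric] by (smt (verit))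
qed

lemma telescoped_descent:
  "m \<le> T \<Longrightarrow> (\<integral>y. dist_sq y m \<partial>paths) + (\<eta> / real N) * (\<Sum>k<m. (\<integral>y. gap y k \<partial>paths))
     \<le> (norm xs)\<^sup>2 + real m * ((2 * \<eta> * L / real N) * consensus_bound + 2 * \<eta>\<^sup>2 * \<sigma>\<^sup>2 / real N)"
proof (induction m)
  case 0
  then show ?case
    by (simp add: dist_sq_def xbar_def X_def x_iter_0 avg_def paths.prob_space)
next
  case (Suc m)
  define R where "R = (2 * \<eta> * L / real N) * consensus_bound + 2 * \<eta>\<^sup>2 * \<sigma>\<^sup>2 / real N"
  have "real (Suc m) * R = real m * R + R" by (simp add: algebra_simps)
  moreover have "(\<eta> / real N) * (\<Sum>k<Suc m. (\<integral>y. gap y k \<partial>paths))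
      = (\<eta> / real N) * (\<integral>y. gap y m \<partial>paths) + (\<eta> / real N) * (\<Sum>k<m. (\<integral>y. gap y k \<partial>paths))"
    by (simp add: algebra_simps)
  ultimately show ?case
    using Suc descent_step[of m] unfolding R_def by simp
qed

end

definition regret_const :: "real \<Rightarrow> real \<Rightarrow> real \<Rightarrow> real \<Rightarrow> 'a::real_normed_vector \<Rightarrow> real" where
  "regret_const L D \<sigma> \<rho> xs = (norm xs)\<^sup>2
     + 2 * L * consensus_gain \<rho> * D * (1 + 4 * consensus_gain \<rho> / (1 - consensus_rate \<rho>))
         / (1 - consensus_rate \<rho>)
     + 2 * \<sigma>\<^sup>2"

context dogd_run
begin

definition path_regret :: "(nat \<times> nat \<Rightarrow> 'b) \<Rightarrow> real" where
  "path_regret y = regret loss g (\<lambda>t i y. y (t, i)) xs W N \<eta> T y"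

lemma path_regret_eq:
  "path_regret y = (1 / real N) * (\<Sum>i<N. \<Sum>t\<in>{1..T}. loss (y (t, i)) (X y (t - 1) i) - loss (y (t, i)) xs)"
  unfolding path_regret_def regret_def dogd_x_def X_def x_iter_def by (simp add: sum_subtractf)

lemma integrable_regret_term:
  "t \<in> {1..T} \<Longrightarrow> i < N \<Longrightarrow> integrable paths (\<lambda>y. loss (y (t, i)) (X y (t - 1) i) - loss (y (t, i)) xs)"
  by (intro Bochner_Integration.integrable_diff integrable_loss_at square_integrable_X
      paths.square_integrable_const) (auto simp: mem_coords)

lemma integrable_path_regret: "integrable paths path_regret"
  unfolding path_regret_eq using integrable_regret_term
  by (intro integrable_mult_right Bochner_Integration.integrable_sum) auto

lemma integral_regret_term:
  assumes "t \<in> {1..T}" "i < N"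
  shows "(\<integral>y. loss (y (t, i)) (X y (t - 1) i) - loss (y (t, i)) xs \<partial>paths) = (\<integral>y. F (X y (t - 1) i) \<partial>paths) - F xs"
proof -
  have "t - 1 < T" "t - 1 + 1 = t" "(t, i) \<in> coords" using assms by (auto simp: mem_coords)
  then show ?thesis
    using integral_loss_X[of "t - 1" i] integral_loss_xs[of t i] assms
    by (simp add: Bochner_Integration.integral_diff integrable_loss_at square_integrable_X
        paths.square_integrable_const)
qed

lemma integral_path_regret: "(\<integral>y. path_regret y \<partial>paths) = (1 / real N) * (\<Sum>k<T. (\<integral>y. gap y k \<partial>paths))"
proof -
  have "(\<integral>y. path_regret y \<partial>paths)
      = (1 / real N) * (\<Sum>i<N. \<Sum>t\<in>{1..T}. (\<integral>y. F (X y (t - 1) i) \<partial>paths) - F xs)"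
    unfolding path_regret_eq using integrable_regret_term integral_regret_term
      integral_double_sum[of "{..<N}" "{1..T}" paths
        "\<lambda>i t y. loss (y (t, i)) (X y (t - 1) i) - loss (y (t, i)) xs"]
    by simp
  also have "\<dots> = (1 / real N) * (\<Sum>k<T. \<Sum>i<N. (\<integral>y. F (X y k i) \<partial>paths) - F xs)"
    by (subst sum.swap) (simp add: sum.atLeast1_atMost_eq)
  also have "\<dots> = (1 / real N) * (\<Sum>k<T. (\<integral>y. gap y k \<partial>paths))"
    by (simp add: integral_gap)
  finally show ?thesis .
qed

lemma integral_path_regret_nonneg: "0 \<le> (\<integral>y. path_regret y \<partial>paths)"
  unfolding integral_path_regret by (intro mult_nonneg_nonneg sum_nonneg integral_nonneg_AE) (auto simp: gap_nonneg)

lemma integral_path_regret_le: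
  "(\<integral>y. path_regret y \<partial>paths) \<le> regret_const L D \<sigma> \<rho> xs * (\<eta>\<^sup>2 * real T + \<eta> * real T / real N + 1 / \<eta>)"
proof -
  define Z where "Z = 1 + 4 * consensus_gain \<rho> / (1 - consensus_rate \<rho>)"
  define C1 where "C1 = 2 * L * consensus_gain \<rho> * D * Z / (1 - consensus_rate \<rho>)"
  have N: "0 < real N" using N_pos by simp
  have C1: "0 \<le> C1" unfolding C1_def Z_def using consensus_constants[OF \<rho>] L_pos D_nonneg by simp
  have "1 - consensus_rate \<rho> \<noteq> 0" using consensus_constants[OF \<rho>] by simp
  then have consensus_term: "(2 * \<eta> * L / real N) * consensus_bound = \<eta> * (\<eta>\<^sup>2 * C1)"
    unfolding consensus_bound_def tracking_bound_def C1_def Z_def[symmetric] using N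
    by (simp add: field_simps power2_eq_square)
  have "(\<eta> / real N) * (\<Sum>k<T. (\<integral>y. gap y k \<partial>paths))
      \<le> (norm xs)\<^sup>2 + real T * (\<eta> * (\<eta>\<^sup>2 * C1) + 2 * \<eta>\<^sup>2 * \<sigma>\<^sup>2 / real N)"
  proof -
    have "0 \<le> (\<integral>y. dist_sq y T \<partial>paths)"
      by (rule integral_nonneg_AE) (simp add: dist_sq_def)
    then show ?thesis using telescoped_descent[of T] unfolding consensus_term by simp
  qed
  then have "(1 / real N) * (\<Sum>k<T. (\<integral>y. gap y k \<partial>paths))
      \<le> (norm xs)\<^sup>2 * (1 / \<eta>) + C1 * (\<eta>\<^sup>2 * real T) + 2 * \<sigma>\<^sup>2 * (\<eta> * real T / real N)"
    using \<eta>_pos by (simp add: field_simps power2_eq_square)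
  also have "\<dots> \<le> regret_const L D \<sigma> \<rho> xs * (\<eta>\<^sup>2 * real T + \<eta> * real T / real N + 1 / \<eta>)"
    unfolding regret_const_def Z_def[symmetric] C1_def[symmetric] using C1 \<eta>_pos N
    by (simp add: algebra_simps add_mono mult_right_mono)
  finally show ?thesis unfolding integral_path_regret .
qed

end

context dogd_run
begin

lemma regret_eq_path_regret:
  "regret loss g \<xi> xs W N \<eta> T \<omega> = path_regret (\<lambda>ti\<in>coords. \<xi> (fst ti) (snd ti) \<omega>)"
proof -
  define y where "y = (\<lambda>ti\<in>coords. \<xi> (fst ti) (snd ti) \<omega>)"
  have y: "y (t, i) = \<xi> t i \<omega>" if "t \<in> {1..T}" "i < N" for t i
    using that unfolding y_def by (simp add: mem_coords)
  have "dogd_x (\<lambda>t i x. g (\<xi> t i \<omega>) x) W N \<eta> t i = dogd_x (\<lambda>t i x. g (y (t, i)) x) W N \<eta> t i"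
    if "t \<in> {1..T}" "i < N" for t i
    using that y unfolding dogd_x_def x_iter_def[symmetric]
    by (intro dogd_iter_cong[THEN conjunct1]) auto
  then show ?thesis
    unfolding path_regret_def regret_def y_def[symmetric] using y by (intro arg_cong2[where f="(*)"] refl
        arg_cong2[where f="(-)"] sum.cong) auto
qed

lemma distr_samples_eq_paths:
  assumes M: "prob_space M" and meas: "\<And>t i. \<xi> t i \<in> measurable M P"
    and distr: "\<And>t i. distr M P (\<xi> t i) = P"
    and indep: "prob_space.indep_vars M (\<lambda>_. P) (\<lambda>ti. \<xi> (fst ti) (snd ti)) UNIV"
  shows "distr M paths (\<lambda>\<omega>. \<lambda>ti\<in>coords. \<xi> (fst ti) (snd ti) \<omega>) = paths"
proof -
  interpret M: prob_space M by (rule M)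
  have "(1, 0) \<in> coords" using N_pos T_pos by (simp add: mem_coords)
  then have "coords \<noteq> {}" by auto
  moreover have "M.indep_vars (\<lambda>_. P) (\<lambda>ti. \<xi> (fst ti) (snd ti)) coords"
    by (rule M.indep_vars_subset[OF indep]) simp
  ultimately have "distr M paths (\<lambda>\<omega>. \<lambda>ti\<in>coords. \<xi> (fst ti) (snd ti) \<omega>)
      = PiM coords (\<lambda>ti. distr M P (\<xi> (fst ti) (snd ti)))"
    using M.indep_vars_iff_distr_eq_PiM'[where M'="\<lambda>_. P" and X="\<lambda>ti. \<xi> (fst ti) (snd ti)"] meas
    by simp
  then show ?thesis by (simp add: distr)
qed

lemma expected_regret_eq_integral_path_regret:
  assumes M: "prob_space M" and meas: "\<And>t i. \<xi> t i \<in> measurable M P"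
    and "\<And>t i. distr M P (\<xi> t i) = P"
    and "prob_space.indep_vars M (\<lambda>_. P) (\<lambda>ti. \<xi> (fst ti) (snd ti)) UNIV"
  shows "expected_regret M loss g \<xi> xs W N \<eta> T = (\<integral>y. path_regret y \<partial>paths)"
proof -
  let ?samples = "\<lambda>\<omega>. \<lambda>ti\<in>coords. \<xi> (fst ti) (snd ti) \<omega>"
  have "?samples \<in> measurable M paths"
    by (intro measurable_restrict meas)
  moreover have "path_regret \<in> borel_measurable paths"
    using integrable_path_regret by auto
  ultimately have "(\<integral>\<omega>. path_regret (?samples \<omega>) \<partial>M) = (\<integral>y. path_regret y \<partial>distr M paths ?samples)"
    by (rule integral_distr[symmetric])
  then show ?thesis
    unfolding expected_regret_def regret_eq_path_regret distr_samples_eq_paths[OF assms] .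
qed

end

lemma eta_max_le:
  assumes "0 < L" "0 < \<rho>" "\<rho> < 1"
  shows "eta_max L \<rho> N T \<le> 1 / (32 * L)"
proof -
  have "(1 - \<rho>\<^sup>2) powr 1.5 \<le> 1"
    using assms by (intro powr_le1) (auto simp: power_le_one)
  also have "1 \<le> sqrt (1 + \<rho>\<^sup>2)" by simp
  finally have "(1 - \<rho>\<^sup>2) powr 1.5 / sqrt (1 + \<rho>\<^sup>2) \<le> 1"
    by (simp add: divide_le_eq_1_pos add_pos_nonneg)
  then have "(1 - \<rho>\<^sup>2) powr 1.5 / sqrt (1 + \<rho>\<^sup>2) / (32 * L) \<le> 1 / (32 * L)"
    using assms(1) by (intro divide_right_mono) auto
  then show ?thesis unfolding eta_max_def by (simp add: mult.commute min.coboundedI1)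
qed

lemma eta_max_pos:
  assumes "0 < L" "0 < \<rho>" "\<rho> < 1" "N \<ge> 1" "T \<ge> 1"
  shows "0 < eta_max L \<rho> N T"
proof -
  have "\<rho>\<^sup>2 < 1" using assms by (simp add: power_less_one_iff)
  moreover have "0 < sqrt (1 + \<rho>\<^sup>2)" by (simp add: add_pos_nonneg)
  ultimately show ?thesis
    unfolding eta_max_def using assms by (auto intro!: divide_pos_pos add_pos_nonneg)
qed

text \<open>With \<open>s = \<surd>(T / N) \<ge> N\<close> (from \<open>N\<^sup>3 \<le> T\<close>), each of the three terms is at most a constant times \<open>s\<close>.\<close>

lemma rate_terms_le_sqrt:
  fixes N T a L \<eta> :: real
  assumes N: "N \<ge> 1" and T: "N ^ 3 \<le> T" and a: "a > 0" and L: "L > 0"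
    and \<eta>: "\<eta> = min a (1 / (2 * L) * sqrt (N / T))"
  shows "\<eta>\<^sup>2 * T + \<eta> * T / N + 1 / \<eta> \<le> (1 / (4 * L\<^sup>2) + 1 / (2 * L) + 1 / a + 2 * L) * sqrt (T / N)"
proof -
  have "N * 1 \<le> N * N\<^sup>2" using N by (intro mult_left_mono) (auto simp: one_le_power)
  then have "N \<le> N ^ 3" by (simp add: power3_eq_cube power2_eq_square)
  then have T0: "T > 0" using N T by linarith
  define s where "s = sqrt (T / N)"
  define b where "b = 1 / (2 * L * s)"
  have s2: "s\<^sup>2 = T / N" unfolding s_def using T0 N by simp
  have N_le_s: "N \<le> s"
    unfolding s_def using N T by (intro real_le_rsqrt) (simp add: field_simps power3_eq_cube power2_eq_square)
  then have s: "0 < s" using N by simp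
  have \<eta>b: "\<eta> = min a b"
    unfolding \<eta> b_def s_def using N T0 by (simp add: real_sqrt_divide)
  then have \<eta>: "0 < \<eta>" "\<eta> \<le> b" using a s L unfolding b_def by auto
  have "\<eta>\<^sup>2 * T \<le> b\<^sup>2 * T" using \<eta> T0 by (intro mult_right_mono power_mono) auto
  also have "\<dots> = N / (4 * L\<^sup>2)"
    unfolding b_def using s2 L s N by (simp add: field_simps power2_eq_square)
  also have "\<dots> \<le> s / (4 * L\<^sup>2)" using N_le_s L by (intro divide_right_mono) auto
  finally have first: "\<eta>\<^sup>2 * T \<le> s / (4 * L\<^sup>2)" .
  have "\<eta> * T / N \<le> b * T / N" using \<eta> T0 N by (intro divide_right_mono mult_right_mono) auto
  also have "\<dots> = s / (2 * L)"
    unfolding b_def using s2 s L N by (simp add: field_simps power2_eq_square)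
  finally have second: "\<eta> * T / N \<le> s / (2 * L)" .
  have "1 / \<eta> \<le> 1 / a + 1 / b" using \<eta>b a \<eta> by (auto simp: min_def)
  also have "1 / a \<le> s / a" using N_le_s N a by (simp add: divide_right_mono)
  also have "1 / b = 2 * L * s" unfolding b_def by simp
  finally have third: "1 / \<eta> \<le> s / a + 2 * L * s" by simp
  show ?thesis
    using first second third unfolding s_def[symmetric] by (simp add: algebra_simps)
qed

lemma eventually_cube_le_of_smallo:
  assumes "(\<lambda>T. real (f T)) \<in> o(\<lambda>T. real T powr (1/3))"
  shows "\<forall>\<^sub>F T in at_top. real (f T) ^ 3 \<le> real T"
proof -
  have "\<forall>\<^sub>F T in at_top. norm (real (f T)) \<le> 1 * norm (real T powr (1/3))"
    using assms by (intro landau_o.smallD) auto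
  then show ?thesis
  proof eventually_elim
    case (elim T)
    then have "real (f T) ^ 3 \<le> (real T powr (1/3)) ^ 3" by (intro power_mono) auto
    also have "\<dots> = real T" by (cases "T = 0") (simp_all add: powr_power)
    finally show ?case .
  qed
qed

locale dogd_experiment = stochastic_convex_problem P loss g gradF xs L D \<sigma>
  for P :: "'b measure" and loss and g :: "'b \<Rightarrow> 'a::euclidean_space \<Rightarrow> 'a" and gradF xs L D \<sigma> +
  fixes M :: "'w measure" and \<xi> :: "nat \<Rightarrow> nat \<Rightarrow> 'w \<Rightarrow> 'b" and \<rho> :: real
  assumes M: "prob_space M"
    and \<xi>_meas: "\<And>t i. \<xi> t i \<in> measurable M P"
    and \<xi>_distr: "\<And>t i. distr M P (\<xi> t i) = P"
    and \<xi>_indep: "prob_space.indep_vars M (\<lambda>_. P) (\<lambda>ti. \<xi> (fst ti) (snd ti)) UNIV"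
    and \<rho>: "0 < \<rho>" "\<rho> < 1"
begin

lemma expected_regret_bounds:
  assumes "N \<ge> 1" "T \<ge> 1" "gossip_matrix N W" "spec_norm N (\<lambda>i j. W i j - 1 / real N) = \<rho>"
    and "0 < \<eta>" "\<eta> \<le> eta_max L \<rho> N T"
  shows "0 \<le> expected_regret M loss g \<xi> xs W N \<eta> T"
    and "expected_regret M loss g \<xi> xs W N \<eta> T
      \<le> regret_const L D \<sigma> \<rho> xs * (\<eta>\<^sup>2 * real T + \<eta> * real T / real N + 1 / \<eta>)"
proof -
  have "\<eta> \<le> 1 / (32 * L)" using assms(6) eta_max_le[OF L_pos \<rho>] by (rule order_trans)
  then have "8 * \<eta> * L \<le> 1" using L_pos by (simp add: field_simps)
  then interpret dogd_run P loss g gradF xs L D \<sigma> N T W \<eta> \<rho>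
    using assms \<rho> unfolding gossip_matrix_def by unfold_locales auto
  have "expected_regret M loss g \<xi> xs W N \<eta> T = (\<integral>y. path_regret y \<partial>paths)"
    by (rule expected_regret_eq_integral_path_regret[OF M \<xi>_meas \<xi>_distr \<xi>_indep])
  then show "0 \<le> expected_regret M loss g \<xi> xs W N \<eta> T"
    and "expected_regret M loss g \<xi> xs W N \<eta> T
      \<le> regret_const L D \<sigma> \<rho> xs * (\<eta>\<^sup>2 * real T + \<eta> * real T / real N + 1 / \<eta>)"
    using integral_path_regret_nonneg integral_path_regret_le by simp_all
qed

lemma regret_const_nonneg: "0 \<le> regret_const L D \<sigma> \<rho> xs"
  using consensus_constants[OF \<rho>] L_pos D_nonneg unfolding regret_const_def by simp

lemma expected_regret_eta_max_bigo:
  assumes net: "\<forall>T. Ns T \<ge> 1 \<and> gossip_matrix (Ns T) (Ws T) \<and> spec_norm (Ns T) (\<lambda>i j. Ws T i j - 1 / real (Ns T)) = \<rho>"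
    and small: "(\<lambda>T. real (Ns T)) \<in> o(\<lambda>T. real T powr (1/3))"
  shows "(\<lambda>T. expected_regret M loss g \<xi> xs (Ws T) (Ns T) (eta_max L \<rho> (Ns T) T) T)
    \<in> O(\<lambda>T. sqrt (real T / real (Ns T)))"
proof -
  define a where "a = (1 - \<rho>\<^sup>2) powr 1.5 / (32 * L * sqrt (1 + \<rho>\<^sup>2))"
  have a: "0 < a" unfolding a_def using eta_max_pos[OF L_pos \<rho>, of 1 1] by (simp add: eta_max_def)
  define K where "K = regret_const L D \<sigma> \<rho> xs * (1 / (4 * L\<^sup>2) + 1 / (2 * L) + 1 / a + 2 * L)"
  have K: "0 \<le> K" unfolding K_def using regret_const_nonneg L_pos a by simp
  show ?thesis
  proof (rule landau_o.bigI[where c = "K + 1"])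
    show "\<forall>\<^sub>F T in at_top. norm (expected_regret M loss g \<xi> xs (Ws T) (Ns T) (eta_max L \<rho> (Ns T) T) T)
        \<le> (K + 1) * norm (sqrt (real T / real (Ns T)))"
      using eventually_cube_le_of_smallo[OF small] eventually_ge_at_top[of "1::nat"]
    proof eventually_elim
      case (elim T)
      define \<eta> where "\<eta> = eta_max L \<rho> (Ns T) T"
      have \<eta>: "0 < \<eta>" unfolding \<eta>_def using net elim by (intro eta_max_pos[OF L_pos \<rho>]) auto
      have "\<eta>\<^sup>2 * real T + \<eta> * real T / real (Ns T) + 1 / \<eta>
          \<le> (1 / (4 * L\<^sup>2) + 1 / (2 * L) + 1 / a + 2 * L) * sqrt (real T / real (Ns T))"
        using net elim a L_pos by (intro rate_terms_le_sqrt) (auto simp: \<eta>_def eta_max_def a_def)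
      then have "norm (expected_regret M loss g \<xi> xs (Ws T) (Ns T) \<eta> T) \<le> K * sqrt (real T / real (Ns T))"
        using expected_regret_bounds[of "Ns T" T "Ws T" \<eta>] net elim \<eta> regret_const_nonneg
        unfolding K_def \<eta>_def by (auto intro: order_trans mult_left_mono simp: mult.assoc)
      also have "\<dots> \<le> (K + 1) * norm (sqrt (real T / real (Ns T)))" by (simp add: mult_right_mono)
      finally show ?case unfolding \<eta>_def .
    qed
  qed (use K in simp)
qed

end

theorem theorem1:
  fixes M :: "'w measure" and P :: "'b measure"
    and \<xi> :: "nat \<Rightarrow> nat \<Rightarrow> 'w \<Rightarrow> 'b"
    and loss :: "'b \<Rightarrow> 'a::euclidean_space \<Rightarrow> real" and g :: "'b \<Rightarrow> 'a \<Rightarrow> 'a"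
    and gradF :: "'a \<Rightarrow> 'a" and xs :: 'a
    and L D \<sigma> \<rho> :: real
  assumes M: "prob_space M" and P: "prob_space P"
    and \<xi>_meas: "\<And>t i. \<xi> t i \<in> measurable M P"
    and \<xi>_distr: "\<And>t i. distr M P (\<xi> t i) = P"
    and \<xi>_indep: "prob_space.indep_vars M (\<lambda>_. P) (\<lambda>ti. \<xi> (fst ti) (snd ti)) UNIV"
    and grad: "\<And>z x. (loss z has_derivative (\<lambda>h. g z x \<bullet> h)) (at x)"
    and convex: "\<And>z. convex_on UNIV (loss z)"
    and L_pos: "L > 0"
    and smooth: "\<And>z x y. norm (g z x - g z y) \<le> L * norm (x - y)"
    and loss_int: "\<And>x. integrable P (\<lambda>z. loss z x)"
    and g_meas: "\<And>x. (\<lambda>z. g z x) \<in> borel_measurable P"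
    and D_int: "\<And>x. integrable P (\<lambda>z. (norm (g z x))\<^sup>2)"
    and D_bound: "\<And>x. (\<integral>z. (norm (g z x))\<^sup>2 \<partial>P) \<le> D"
    and gradF: "\<And>x. ((\<lambda>y. \<integral>z. loss z y \<partial>P) has_derivative (\<lambda>h. gradF x \<bullet> h)) (at x)"
    and \<sigma>_nonneg: "\<sigma> \<ge> 0"
    and var_int: "\<And>x. integrable P (\<lambda>z. (norm (g z x - gradF x))\<^sup>2)"
    and var_bound: "\<And>x. (\<integral>z. (norm (g z x - gradF x))\<^sup>2 \<partial>P) \<le> \<sigma>\<^sup>2"
    and xs_min: "\<And>x. (\<integral>z. loss z xs \<partial>P) \<le> (\<integral>z. loss z x \<partial>P)"
    and \<rho>: "0 < \<rho>" "\<rho> < 1"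
  shows "(\<exists>C. \<forall>N T W \<eta>. N \<ge> 1 \<and> T \<ge> 1 \<and> gossip_matrix N W
            \<and> spec_norm N (\<lambda>i j. W i j - 1 / real N) = \<rho>
            \<and> 0 < \<eta> \<and> \<eta> \<le> eta_max L \<rho> N T \<longrightarrow>
            expected_regret M loss g \<xi> xs W N \<eta> T
              \<le> C * (\<eta>\<^sup>2 * real T + \<eta> * real T / real N + 1 / \<eta>))
     \<and> (\<forall>Ns :: nat \<Rightarrow> nat. \<forall>Ws :: nat \<Rightarrow> nat \<Rightarrow> nat \<Rightarrow> real.
          (\<forall>T. Ns T \<ge> 1 \<and> gossip_matrix (Ns T) (Ws T)
               \<and> spec_norm (Ns T) (\<lambda>i j. Ws T i j - 1 / real (Ns T)) = \<rho>)
          \<and> (\<lambda>T. real (Ns T)) \<in> o(\<lambda>T. real T powr (1/3)) \<longrightarrow>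
          (\<lambda>T. expected_regret M loss g \<xi> xs (Ws T) (Ns T) (eta_max L \<rho> (Ns T) T) T)
            \<in> O(\<lambda>T. sqrt (real T / real (Ns T))))"
proof -
  interpret dogd_experiment P loss g gradF xs L D \<sigma> M \<xi> \<rho>
    by (intro dogd_experiment.intro stochastic_convex_problem.intro dogd_experiment_axioms.intro) (fact assms)+
  show ?thesis
    using expected_regret_bounds(2) expected_regret_eta_max_bigo by blast
qed

end
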